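(* Let $\mathcal{C}=\mathsf{CSS}(A,B)$ be a non-splitting CSS code on $n$ qubits, and let $U$ be a unitary that is $1$-local-Clifford partially addressable on $\mathcal{C}$. Then any $1$-local Clifford circuit that realizes this partial addressing of $U$, written in the normal form $V\cdot Q$ (with $V=\bigotimes_i V_i$, each $V_i\in\{I,P,HP,PH,PHP,H\}$, and $Q$ a Pauli circuit), contains no $H$, $PH$, or $HP$ gates, i.e. $V_i\notin\{H,PH,HP\}$ for all $i$.
   Context: A CSS code $\mathsf{CSS}(A,B)$ on $n$ qubits is given by subspaces $A,B\subseteq\mathbb{F}_2^n$ with $a\cdot b=0$ for all $a\in A,b\in B$; its codespace is the common $+1$-eigenspace of all $X^a$ ($a\in A$) and $Z^b$ ($b\in B$), where for $a\in\mathbb{F}_2^n$ and a single-qubit gate $G$, $G^a=\bigotimes_{i:a_i=1}G_i$. A logical operator is a unitary preserving the codespace. For $a\in\mathbb{F}_2^n$ and $h\subseteq\{1,\dots,n\}$, $a\cap h$ is the vector with $(a\cap h)_i=1$ iff $a_i=1$ and $i\in h$. A subspace $A$ splits on a non-empty $h\subsetneq\{1,\dots,n\}$ if $A=A_1\oplus A_2$ where $A_1$ has support $h$ and $A_2$ is supported on the complement of $h$; the code splits on $h$ if both $A$ and $B$ split on $h$; it is non-splitting if it splits on no such $h$. $P=\mathrm{diag}(1,i)$ is the phase gate and $H$ the Hadamard gate. A $1$-local Clifford circuit is a tensor product of single-qubit Clifford gates; every such circuit equals, up to global phase, $V\cdot Q$ with $Q$ a Pauli circuit and $V$ a tensor product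 of gates from $\{I,P,HP,PH,PHP,H\}$. Fix a choice of logical Pauli operators $\bar X_j,\bar Z_j$ ($j=1,\dots,k$) for the $k$ logical qubits. A logical operator $G$ has logical action $\bar W$, for a $k$-qubit unitary $W=\sum_j\alpha_jW_j$ expanded in Paulis $W_j$, if $G|\psi\rangle=\sum_j\alpha_j\bar W_j|\psi\rangle$ for all codestates, where $\bar W_j$ is the corresponding product of the fixed logical Paulis. For a $p$-qubit unitary $U$ and a family $\mathcal{F}$ of circuits, $U$ is $\mathcal{F}$-partially addressable on $\mathcal{C}$ if there exist a set $I$ of pairwise disjoint ordered $p$-tuples of logical qubits with $I\neq\emptyset$ and $I$ not covering all logical qubits, and a logical operator in $\mathcal{F}$ whose logical action is $\bar U$ applied to each tuple of $I$ (and the identity on the remaining logical qubits). Here $\mathcal{F}$ is the family of $1$-local Clifford circuits. *)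

theory Defs
  imports Complex_Main
begin

text \<open>Qubits are indexed 0..n-1. A vector of F_2^n is a function nat => bool that is
  False outside {0..<n}.
  An n-qubit state is a complex function on bit vectors; an operator is given by its matrix
  entries (rows/columns indexed by bit vectors).\<close>

type_synonym bits = "nat \<Rightarrow> bool"
type_synonym qvec = "bits \<Rightarrow> complex"
type_synonym qmat = "bits \<Rightarrow> bits \<Rightarrow> complex"
type_synonym gate = "bool \<Rightarrow> bool \<Rightarrow> complex"

definition bvecs :: "nat \<Rightarrow> bits set" where
  "bvecs n = {x. \<forall>i. n \<le> i \<longrightarrow> \<not> x i}"

definition states :: "nat \<Rightarrow> qvec set" where
  "states n = {\<psi>. \<forall>x. x \<notin> bvecs n \<longrightarrow> \<psi> x = 0}"

definition app :: "nat \<Rightarrow> qmat \<Rightarrow> qvec \<Rightarrow> qvec" where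
  "app n M \<psi> = (\<lambda>x. if x \<in> bvecs n then (\<Sum>y\<in>bvecs n. M x y * \<psi> y) else 0)"

definition mat_mult :: "nat \<Rightarrow> qmat \<Rightarrow> qmat \<Rightarrow> qmat" where
  "mat_mult n M N = (\<lambda>x z. \<Sum>y\<in>bvecs n. M x y * N y z)"

definition unitary :: "nat \<Rightarrow> qmat \<Rightarrow> bool" where
  "unitary n M \<longleftrightarrow> (\<forall>x\<in>bvecs n. \<forall>z\<in>bvecs n.
      (\<Sum>y\<in>bvecs n. M x y * cnj (M z y)) = (if x = z then 1 else 0))"

definition gI :: gate where "gI a b = (if a = b then 1 else 0)"
definition gX :: gate where "gX a b = (if a \<noteq> b then 1 else 0)"
definition gY :: gate where
  "gY a b = (if a = b then 0 else if a then \<i> else - \<i>)"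
definition gZ :: gate where "gZ a b = (if a = b then (if a then -1 else 1) else 0)"
definition gP :: gate where "gP a b = (if a = b then (if a then \<i> else 1) else 0)"
definition gH :: gate where
  "gH a b = (if a \<and> b then -1 else 1) / complex_of_real (sqrt 2)"

definition gmul :: "gate \<Rightarrow> gate \<Rightarrow> gate" where
  "gmul G1 G2 = (\<lambda>a c. \<Sum>b\<in>UNIV. G1 a b * G2 b c)"

definition tensor :: "nat \<Rightarrow> (nat \<Rightarrow> gate) \<Rightarrow> qmat" where
  "tensor n G = (\<lambda>x y. \<Prod>i<n. G i (x i) (y i))"

definition gpow :: "nat \<Rightarrow> gate \<Rightarrow> bits \<Rightarrow> qmat" where
  "gpow n G a = tensor n (\<lambda>i. if a i then G else gI)"

definition bxor :: "bits \<Rightarrow> bits \<Rightarrow> bits" where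
  "bxor a b = (\<lambda>i. a i \<noteq> b i)"

definition dotp :: "nat \<Rightarrow> bits \<Rightarrow> bits \<Rightarrow> bool" where
  "dotp n a b = odd (card {i. i < n \<and> a i \<and> b i})"

definition f2_subspace :: "nat \<Rightarrow> bits set \<Rightarrow> bool" where
  "f2_subspace n A \<longleftrightarrow> A \<subseteq> bvecs n \<and> (\<lambda>_. False) \<in> A \<and>
     (\<forall>a\<in>A. \<forall>b\<in>A. bxor a b \<in> A)"

definition css_code :: "nat \<Rightarrow> bits set \<Rightarrow> bits set \<Rightarrow> bool" where
  "css_code n A B \<longleftrightarrow> f2_subspace n A \<and> f2_subspace n B \<and>
     (\<forall>a\<in>A. \<forall>b\<in>B. \<not> dotp n a b)"

definition codespace :: "nat \<Rightarrow> bits set \<Rightarrow> bits set \<Rightarrow> qvec set" where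
  "codespace n A B = {\<psi> \<in> states n.
      (\<forall>a\<in>A. app n (gpow n gX a) \<psi> = \<psi>) \<and> (\<forall>b\<in>B. app n (gpow n gZ b) \<psi> = \<psi>)}"

definition logical_op :: "nat \<Rightarrow> bits set \<Rightarrow> bits set \<Rightarrow> qmat \<Rightarrow> bool" where
  "logical_op n A B M \<longleftrightarrow> unitary n M \<and>
     (\<forall>\<psi>\<in>codespace n A B. app n M \<psi> \<in> codespace n A B)"

definition splits_on :: "nat \<Rightarrow> bits set \<Rightarrow> nat set \<Rightarrow> bool" where
  "splits_on n A h \<longleftrightarrow> (\<exists>A1 A2. f2_subspace n A1 \<and> f2_subspace n A2 \<and>
      (\<forall>a\<in>A1. \<forall>i. a i \<longrightarrow> i \<in> h) \<and> (\<forall>a\<in>A2. \<forall>i. a i \<longrightarrow> i \<notin> h) \<and>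
      A = {bxor a1 a2 | a1 a2. a1 \<in> A1 \<and> a2 \<in> A2})"

definition non_splitting :: "nat \<Rightarrow> bits set \<Rightarrow> bits set \<Rightarrow> bool" where
  "non_splitting n A B \<longleftrightarrow> (\<forall>h. h \<noteq> {} \<and> h \<subset> {0..<n} \<longrightarrow>
      \<not> (splits_on n A h \<and> splits_on n B h))"

definition is_pauli :: "nat \<Rightarrow> qmat \<Rightarrow> bool" where
  "is_pauli n M \<longleftrightarrow> (\<exists>m::nat. \<exists>a\<in>bvecs n. \<exists>b\<in>bvecs n.
      M = (\<lambda>x y. \<i> ^ m * mat_mult n (gpow n gX a) (gpow n gZ b) x y))"

text \<open>A choice of logical Paulis LX j, LZ j (j < k) for the k logical qubits of CSS(A,B):
  k = n - dim A - dim B, each is an n-qubit Pauli operator preserving the codespace, and on the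
  codespace they satisfy the k-qubit Pauli relations.\<close>
definition logical_paulis ::
  "nat \<Rightarrow> bits set \<Rightarrow> bits set \<Rightarrow> nat \<Rightarrow> (nat \<Rightarrow> qmat) \<Rightarrow> (nat \<Rightarrow> qmat) \<Rightarrow> bool" where
  "logical_paulis n A B k LX LZ \<longleftrightarrow>
     2 ^ k * card A * card B = 2 ^ n \<and>
     (\<forall>j<k. is_pauli n (LX j) \<and> is_pauli n (LZ j) \<and>
            logical_op n A B (LX j) \<and> logical_op n A B (LZ j)) \<and>
     (\<forall>\<psi>\<in>codespace n A B. \<forall>j<k.
        app n (LX j) (app n (LX j) \<psi>) = \<psi> \<and>
        app n (LZ j) (app n (LZ j) \<psi>) = \<psi> \<and>
        app n (LX j) (app n (LZ j) \<psi>) = - app n (LZ j) (app n (LX j) \<psi>) \<and>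
        (\<forall>l<k. l \<noteq> j \<longrightarrow>
           app n (LX j) (app n (LX l) \<psi>) = app n (LX l) (app n (LX j) \<psi>) \<and>
           app n (LZ j) (app n (LZ l) \<psi>) = app n (LZ l) (app n (LZ j) \<psi>) \<and>
           app n (LX j) (app n (LZ l) \<psi>) = app n (LZ l) (app n (LX j) \<psi>)))"

fun lprod :: "nat \<Rightarrow> (nat \<Rightarrow> qmat) \<Rightarrow> bits \<Rightarrow> nat \<Rightarrow> qvec \<Rightarrow> qvec" where
  "lprod n L u 0 \<psi> = \<psi>"
| "lprod n L u (Suc j) \<psi> = (if u j then app n (L j) (lprod n L u j \<psi>) else lprod n L u j \<psi>)"

text \<open>The logical version of the k-qubit Pauli X^u Z^v.\<close>
definition logical_pauli_app ::
  "nat \<Rightarrow> nat \<Rightarrow> (nat \<Rightarrow> qmat) \<Rightarrow> (nat \<Rightarrow> qmat) \<Rightarrow> bits \<Rightarrow> bits \<Rightarrow> qvec \<Rightarrow> qvec" where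
  "logical_pauli_app n k LX LZ u v \<psi> = lprod n LX u k (lprod n LZ v k \<psi>)"

text \<open>Coefficient of X^u Z^v in the Pauli expansion of the k-qubit operator W.\<close>
definition pauli_coeff :: "nat \<Rightarrow> qmat \<Rightarrow> bits \<Rightarrow> bits \<Rightarrow> complex" where
  "pauli_coeff k W u v =
     (\<Sum>x\<in>bvecs k. \<Sum>y\<in>bvecs k. cnj (mat_mult k (gpow k gX u) (gpow k gZ v) x y) * W x y)
     / 2 ^ k"

definition has_logical_action ::
  "nat \<Rightarrow> bits set \<Rightarrow> bits set \<Rightarrow> nat \<Rightarrow> (nat \<Rightarrow> qmat) \<Rightarrow> (nat \<Rightarrow> qmat) \<Rightarrow> qmat \<Rightarrow> qmat \<Rightarrow> bool" where
  "has_logical_action n A B k LX LZ G W \<longleftrightarrow> logical_op n A B G \<and>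
     (\<forall>\<psi>\<in>codespace n A B. app n G \<psi> =
        (\<lambda>x. \<Sum>u\<in>bvecs k. \<Sum>v\<in>bvecs k. pauli_coeff k W u v * logical_pauli_app n k LX LZ u v \<psi> x))"

definition addr_set :: "nat \<Rightarrow> nat \<Rightarrow> nat list set \<Rightarrow> bool" where
  "addr_set k p I \<longleftrightarrow> finite I \<and> I \<noteq> {} \<and>
     (\<forall>t\<in>I. length t = p \<and> distinct t \<and> set t \<subseteq> {0..<k}) \<and>
     (\<forall>t\<in>I. \<forall>s\<in>I. t \<noteq> s \<longrightarrow> set t \<inter> set s = {}) \<and>
     (\<Union>t\<in>I. set t) \<noteq> {0..<k}"

definition addr_target :: "nat \<Rightarrow> nat \<Rightarrow> qmat \<Rightarrow> nat list set \<Rightarrow> qmat" where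
  "addr_target k p U I = (\<lambda>x y.
     (\<Prod>t\<in>I. U (\<lambda>j. j < p \<and> x (t ! j)) (\<lambda>j. j < p \<and> y (t ! j))) *
     (\<Prod>i\<in>{0..<k} - (\<Union>t\<in>I. set t). if x i = y i then 1 else 0))"

datatype vlabel = VI | VP | VHP | VPH | VPHP | VH

fun vgate :: "vlabel \<Rightarrow> gate" where
  "vgate VI = gI"
| "vgate VP = gP"
| "vgate VHP = gmul gH gP"
| "vgate VPH = gmul gP gH"
| "vgate VPHP = gmul gP (gmul gH gP)"
| "vgate VH = gH"

end

theory Submission
  imports Defs
begin

text \<open>For the circuit \<open>G = c V Q\<close>, \<open>G\<^sup>-\<^sup>1 X\<^sup>a Z\<^sup>b G\<close> is a multiple of \<open>X\<^sup>a' Z\<^sup>b'\<close> with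
  \<open>(a', b') = T (a, b)\<close>, where \<open>T\<close> is the qubit-wise symplectic map induced by \<open>V\<close>. As \<open>G\<close> is logical,
  \<open>T\<close> maps the stabilizer group \<open>A \<times> B\<close> into itself. Some logical qubit \<open>j\<close> is not addressed,
  so \<open>G\<close> commutes on the codespace with the logical Paulis \<open>X\<^sub>j = X\<^sup>u\<^sup>1 Z\<^sup>v\<^sup>1\<close> and
  \<open>Z\<^sub>j = X\<^sup>u\<^sup>2 Z\<^sup>v\<^sup>2\<close>, i.e. \<open>(u, v) + T (u, v) \<in> A \<times> B\<close> for both of them.

  If some \<open>V\<^sub>i\<close> is \<open>PH\<close> or \<open>HP\<close>, then \<open>T\<^sup>2\<close> moves the \<open>X\<close>-parts of stabilizers on these qubits
  into \<open>Z\<close>-parts and vice versa, so \<open>A\<close> and \<open>B\<close> both split on the set of such qubits; by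
  non-splitting it is everything. Then \<open>T\<^sup>2 + T + 1 = 0\<close>, so \<open>(u1, v1) = T ((u1, v1) + T (u1, v1))\<close>
  is a stabilizer, contradicting that \<open>X\<^sub>j\<close> anticommutes with \<open>Z\<^sub>j\<close>. Otherwise, if some \<open>V\<^sub>i = H\<close>,
  the \<open>H\<close>-qubits form a splitting set, so \<open>V = H\<^sup>\<otimes>\<^sup>n\<close>, \<open>T\<close> swaps \<open>X\<close> and \<open>Z\<close>, and
  \<open>u + v \<in> B\<close> for both logicals, which makes \<open>X\<^sub>j\<close> and \<open>Z\<^sub>j\<close> commute.\<close>

section \<open>Single-qubit Paulis under conjugation by the normal-form gates\<close>

text \<open>The matrix of \<open>X\<^sup>a Z\<^sup>b\<close> (in this order).\<close>
definition xz_gate :: "bool \<Rightarrow> bool \<Rightarrow> gate" where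
  "xz_gate a b u v = (if v = (u \<noteq> a) then (if b \<and> v then -1 else 1) else 0)"

lemma sum_UNIV_bool: "(\<Sum>b\<in>(UNIV::bool set). f b) = f False + f True"
  by (simp add: UNIV_bool add.commute)

lemma gmul_assoc: "gmul (gmul A B) C = gmul A (gmul B C)"
  by (simp add: gmul_def sum_UNIV_bool fun_eq_iff algebra_simps)

lemma gmul_gI_left: "gmul gI A = A"
  by (simp add: gmul_def sum_UNIV_bool fun_eq_iff gI_def)

lemma gmul_scaleL: "gmul (\<lambda>a b. s * A a b) B = (\<lambda>a c. s * gmul A B a c)"
  by (simp add: gmul_def fun_eq_iff sum_distrib_left mult.assoc)

lemma gmul_scaleR: "gmul A (\<lambda>a b. s * B a b) = (\<lambda>a c. s * gmul A B a c)"
  by (simp add: gmul_def fun_eq_iff sum_distrib_left mult.left_commute)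

lemma xz_gate_mult:
  "gmul (xz_gate a b) (xz_gate c d) = (\<lambda>u v. (if b \<and> c then -1 else 1) * xz_gate (a \<noteq> c) (b \<noteq> d) u v)"
  by (cases a; cases b; cases c; cases d) (auto simp: gmul_def sum_UNIV_bool xz_gate_def fun_eq_iff)

text \<open>Replacing \<open>H\<close> by \<open>\<surd>2 H\<close> keeps the case computations below free of square roots.\<close>
definition gH_unnorm :: gate where "gH_unnorm a b = (if a \<and> b then -1 else 1)"

definition gP_adj :: gate where "gP_adj a b = (if a = b then (if a then -\<i> else 1) else 0)"

fun vgate_unnorm :: "vlabel \<Rightarrow> gate" where
  "vgate_unnorm VI = gI"
| "vgate_unnorm VP = gP"
| "vgate_unnorm VHP = gmul gH_unnorm gP"
| "vgate_unnorm VPH = gmul gP gH_unnorm"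
| "vgate_unnorm VPHP = gmul gP (gmul gH_unnorm gP)"
| "vgate_unnorm VH = gH_unnorm"

fun vgate_unnorm_inv :: "vlabel \<Rightarrow> gate" where
  "vgate_unnorm_inv VI = gI"
| "vgate_unnorm_inv VP = gP_adj"
| "vgate_unnorm_inv VHP = gmul gP_adj gH_unnorm"
| "vgate_unnorm_inv VPH = gmul gH_unnorm gP_adj"
| "vgate_unnorm_inv VPHP = gmul gP_adj (gmul gH_unnorm gP_adj)"
| "vgate_unnorm_inv VH = gH_unnorm"

definition gH_scale :: complex where "gH_scale = 1 / complex_of_real (sqrt 2)"

definition vgate_scale :: "vlabel \<Rightarrow> complex" where
  "vgate_scale v = (if v \<in> {VHP, VPH, VPHP, VH} then gH_scale else 1)"

definition unnorm_factor :: "vlabel \<Rightarrow> complex" where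
  "unnorm_factor v = (if v \<in> {VHP, VPH, VPHP, VH} then 2 else 1)"

lemma vgate_scale_nonzero: "vgate_scale v \<noteq> 0"
  by (simp add: vgate_scale_def gH_scale_def)

lemma unnorm_factor_nonzero: "unnorm_factor v \<noteq> 0"
  by (simp add: unnorm_factor_def)

lemma gH_eq_scaled: "gH = (\<lambda>a b. gH_scale * gH_unnorm a b)"
  by (simp add: fun_eq_iff gH_def gH_unnorm_def gH_scale_def)

lemma vgate_eq_scaled: "vgate v = (\<lambda>a b. vgate_scale v * vgate_unnorm v a b)"
  by (cases v) (simp_all add: vgate_scale_def gH_eq_scaled gmul_scaleL gmul_scaleR fun_eq_iff)

lemma clifford_unnorm_inv_right:
  assumes "q \<in> {gI, gX, gY, gZ}"
  shows "gmul (gmul (vgate_unnorm v) q) (gmul q (vgate_unnorm_inv v)) = (\<lambda>a b. unnorm_factor v * gI a b)"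
  using assms
  by (cases v) (auto simp: fun_eq_iff gmul_def sum_UNIV_bool gI_def gX_def gY_def gZ_def gP_def
      gP_adj_def gH_unnorm_def unnorm_factor_def)

lemma clifford_unnorm_inv_left:
  assumes "q \<in> {gI, gX, gY, gZ}"
  shows "gmul (gmul q (vgate_unnorm_inv v)) (gmul (vgate_unnorm v) q) = (\<lambda>a b. unnorm_factor v * gI a b)"
  using assms
  by (cases v) (auto simp: fun_eq_iff gmul_def sum_UNIV_bool gI_def gX_def gY_def gZ_def gP_def
      gP_adj_def gH_unnorm_def unnorm_factor_def)

lemma clifford_gate_left_invertible:
  assumes q: "q \<in> {gI, gX, gY, gZ}"
  shows "\<exists>w. gmul w (gmul (vgate v) q) = gI"
proof
  let ?s = "1 / (vgate_scale v * unnorm_factor v)"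
  have "gmul (\<lambda>x y. ?s * gmul q (vgate_unnorm_inv v) x y) (gmul (vgate v) q)
      = (\<lambda>x y. ?s * (vgate_scale v * (unnorm_factor v * gI x y)))"
    unfolding vgate_eq_scaled gmul_scaleL gmul_scaleR clifford_unnorm_inv_left[OF q] ..
  then show "gmul (\<lambda>x y. ?s * gmul q (vgate_unnorm_inv v) x y) (gmul (vgate v) q) = gI"
    using vgate_scale_nonzero[of v] unnorm_factor_nonzero[of v] by (simp add: fun_eq_iff)
qed

text \<open>\<open>img_X v\<close> and \<open>img_Z v\<close> are the exponent pairs \<open>(x, z)\<close> of \<open>V\<^sup>-\<^sup>1 X V\<close> and \<open>V\<^sup>-\<^sup>1 Z V\<close> up to
  phase; \<open>conj_x\<close> and \<open>conj_z\<close> extend them linearly to \<open>X\<^sup>a Z\<^sup>b\<close>.\<close>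
fun img_X :: "vlabel \<Rightarrow> bool \<times> bool" where
  "img_X VI = (True, False)" | "img_X VP = (True, True)" | "img_X VHP = (False, True)"
| "img_X VPH = (True, True)" | "img_X VPHP = (True, False)" | "img_X VH = (False, True)"

fun img_Z :: "vlabel \<Rightarrow> bool \<times> bool" where
  "img_Z VI = (False, True)" | "img_Z VP = (False, True)" | "img_Z VHP = (True, True)"
| "img_Z VPH = (True, False)" | "img_Z VPHP = (True, True)" | "img_Z VH = (True, False)"

definition conj_x :: "vlabel \<Rightarrow> bool \<Rightarrow> bool \<Rightarrow> bool" where
  "conj_x v a b = ((a \<and> fst (img_X v)) \<noteq> (b \<and> fst (img_Z v)))"

definition conj_z :: "vlabel \<Rightarrow> bool \<Rightarrow> bool \<Rightarrow> bool" where
  "conj_z v a b = ((a \<and> snd (img_X v)) \<noteq> (b \<and> snd (img_Z v)))"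

lemma xz_gate_conj_unnorm:
  fixes a b :: bool and v :: vlabel
  assumes "q \<in> {gI, gX, gY, gZ}"
  defines "r \<equiv> gmul (gmul q (vgate_unnorm_inv v)) (gmul (xz_gate a b) (gmul (vgate_unnorm v) q))"
  shows "r = (\<lambda>u w. (r False (conj_x v a b) * (if conj_x v a b \<and> conj_z v a b then -1 else 1))
                * xz_gate (conj_x v a b) (conj_z v a b) u w)"
  using assms
  by (cases v; cases a; cases b)
    (auto simp: fun_eq_iff gmul_def sum_UNIV_bool gI_def gX_def gY_def gZ_def gP_def gP_adj_def
      gH_unnorm_def xz_gate_def conj_x_def conj_z_def)

lemma xz_gate_conj:
  assumes q: "q \<in> {gI, gX, gY, gZ}"
  shows "\<exists>lam. gmul (xz_gate a b) (gmul (vgate v) q)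
     = gmul (gmul (vgate v) q) (\<lambda>u w. lam * xz_gate (conj_x v a b) (conj_z v a b) u w)"
proof -
  define w where "w = gmul (vgate_unnorm v) q"
  define r where "r = gmul (gmul q (vgate_unnorm_inv v)) (gmul (xz_gate a b) w)"
  define lam where "lam = r False (conj_x v a b) * (if conj_x v a b \<and> conj_z v a b then -1 else 1)"
  have r: "r = (\<lambda>u w. lam * xz_gate (conj_x v a b) (conj_z v a b) u w)"
    unfolding lam_def r_def w_def by (rule xz_gate_conj_unnorm[OF q])
  have "gmul w r = gmul (gmul w (gmul q (vgate_unnorm_inv v))) (gmul (xz_gate a b) w)"
    unfolding r_def by (simp add: gmul_assoc)
  also have "\<dots> = (\<lambda>x y. unnorm_factor v * gmul (xz_gate a b) w x y)"
    unfolding w_def clifford_unnorm_inv_right[OF q] gmul_scaleL gmul_gI_left ..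
  finally have e: "gmul (xz_gate a b) w
      = gmul w (\<lambda>u w. (lam / unnorm_factor v) * xz_gate (conj_x v a b) (conj_z v a b) u w)"
    using unnorm_factor_nonzero[of v] unfolding r gmul_scaleR by (auto simp: fun_eq_iff field_simps)
  have scaled: "gmul (vgate v) q = (\<lambda>x y. vgate_scale v * w x y)"
    unfolding w_def vgate_eq_scaled gmul_scaleL ..
  show ?thesis
    unfolding scaled gmul_scaleL gmul_scaleR e by blast
qed

section \<open>Bit vectors, tensor products and Pauli operators\<close>

lemma bvecs_Suc: "bvecs (Suc n) = (\<lambda>(y, b). y(n := b)) ` (bvecs n \<times> UNIV)"
proof (rule set_eqI, rule iffI)
  fix x assume x: "x \<in> bvecs (Suc n)"
  have "x(n := False) \<in> bvecs n" using x by (auto simp: bvecs_def)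
  moreover have "x = (x(n := False))(n := x n)" by simp
  ultimately show "x \<in> (\<lambda>(y, b). y(n := b)) ` (bvecs n \<times> UNIV)"
    by (intro image_eqI[where x="(x(n := False), x n)"]) auto
next
  fix x assume "x \<in> (\<lambda>(y, b). y(n := b)) ` (bvecs n \<times> UNIV)"
  then show "x \<in> bvecs (Suc n)" by (auto simp: bvecs_def)
qed

lemma bvecs_0: "bvecs 0 = {\<lambda>_. False}"
  by (auto simp: bvecs_def)

lemma finite_bvecs: "finite (bvecs n)"
  by (induction n) (simp_all add: bvecs_0 bvecs_Suc)

lemma sum_bvecs_Suc: "(\<Sum>y\<in>bvecs (Suc n). f y) = (\<Sum>y\<in>bvecs n. \<Sum>b\<in>UNIV. f (y(n := b)))"
proof -
  have "inj_on (\<lambda>(y, b). y(n := b)) (bvecs n \<times> UNIV)"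
  proof (rule inj_onI, clarify)
    fix y b y' b' assume y: "y \<in> bvecs n" "y' \<in> bvecs n" and e: "y(n := b) = y'(n := b')"
    have "y i = y' i" for i
      using fun_cong[OF e, of i] y by (cases "i = n") (auto simp: bvecs_def)
    then show "y = y' \<and> b = b'" using fun_cong[OF e, of n] by auto
  qed
  then have "(\<Sum>y\<in>bvecs (Suc n). f y) = (\<Sum>p\<in>bvecs n \<times> UNIV. f ((\<lambda>(y, b). y(n := b)) p))"
    unfolding bvecs_Suc by (rule sum.reindex[unfolded comp_def])
  then show ?thesis by (simp add: sum.cartesian_product split_def)
qed

lemma sum_bvecs_prod:
  fixes h :: "nat \<Rightarrow> bool \<Rightarrow> 'a::comm_semiring_1"
  shows "(\<Sum>y\<in>bvecs n. \<Prod>i<n. h i (y i)) = (\<Prod>i<n. \<Sum>b\<in>UNIV. h i b)"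
proof (induction n)
  case 0
  then show ?case by (simp add: bvecs_0)
next
  case (Suc n)
  have "(\<Sum>y\<in>bvecs (Suc n). \<Prod>i<Suc n. h i (y i))
      = (\<Sum>y\<in>bvecs n. \<Sum>b\<in>UNIV. \<Prod>i<Suc n. h i ((y(n := b)) i))"
    by (rule sum_bvecs_Suc)
  also have "\<dots> = (\<Sum>y\<in>bvecs n. \<Sum>b\<in>UNIV. (\<Prod>i<n. h i (y i)) * h n b)"
  proof (intro sum.cong refl)
    fix y b
    have "(\<Prod>i<n. h i ((y(n := b)) i)) = (\<Prod>i<n. h i (y i))"
      by (intro prod.cong) auto
    then show "(\<Prod>i<Suc n. h i ((y(n := b)) i)) = (\<Prod>i<n. h i (y i)) * h n b"
      by (simp add: lessThan_Suc mult.commute)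
  qed
  also have "\<dots> = (\<Sum>y\<in>bvecs n. \<Prod>i<n. h i (y i)) * (\<Sum>b\<in>UNIV. h n b)"
    by (simp add: sum_product)
  also have "\<dots> = (\<Prod>i<Suc n. \<Sum>b\<in>UNIV. h i b)"
    using Suc by (simp add: lessThan_Suc mult.commute)
  finally show ?case .
qed

lemma tensor_mult: "mat_mult n (tensor n F) (tensor n G) = tensor n (\<lambda>i. gmul (F i) (G i))"
proof (intro ext)
  fix x z
  have "mat_mult n (tensor n F) (tensor n G) x z
      = (\<Sum>y\<in>bvecs n. \<Prod>i<n. F i (x i) (y i) * G i (y i) (z i))"
    by (simp add: mat_mult_def tensor_def prod.distrib)
  also have "\<dots> = (\<Prod>i<n. \<Sum>b\<in>UNIV. F i (x i) b * G i b (z i))"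
    by (rule sum_bvecs_prod)
  finally show "mat_mult n (tensor n F) (tensor n G) x z = tensor n (\<lambda>i. gmul (F i) (G i)) x z"
    by (simp add: tensor_def gmul_def)
qed

lemma tensor_scaled: "tensor n (\<lambda>i u v. c i * F i u v) = (\<lambda>x y. (\<Prod>i<n. c i) * tensor n F x y)"
  by (simp add: tensor_def prod.distrib fun_eq_iff)

lemma tensor_cong: "(\<And>i. i < n \<Longrightarrow> F i = G i) \<Longrightarrow> tensor n F = tensor n G"
  by (simp add: tensor_def fun_eq_iff)

lemma mat_mult_scaleR: "mat_mult n M (\<lambda>x y. c * N x y) = (\<lambda>x y. c * mat_mult n M N x y)"
  by (simp add: mat_mult_def fun_eq_iff sum_distrib_left mult.left_commute)

lemma app_mult: "app n (mat_mult n M N) \<psi> = app n M (app n N \<psi>)"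
proof (intro ext)
  fix x
  show "app n (mat_mult n M N) \<psi> x = app n M (app n N \<psi>) x"
  proof (cases "x \<in> bvecs n")
    case True
    have "app n M (app n N \<psi>) x = (\<Sum>y\<in>bvecs n. M x y * (\<Sum>z\<in>bvecs n. N y z * \<psi> z))"
      using True by (simp add: app_def)
    also have "\<dots> = (\<Sum>y\<in>bvecs n. \<Sum>z\<in>bvecs n. M x y * N y z * \<psi> z)"
      by (simp add: sum_distrib_left mult.assoc)
    also have "\<dots> = (\<Sum>z\<in>bvecs n. \<Sum>y\<in>bvecs n. M x y * N y z * \<psi> z)"
      by (rule sum.swap)
    also have "\<dots> = app n (mat_mult n M N) \<psi> x"
      using True by (simp add: app_def mat_mult_def sum_distrib_right)
    finally show ?thesis by simp
  qed (simp add: app_def)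
qed

lemma app_scaled: "app n (\<lambda>x y. c * M x y) \<psi> = (\<lambda>x. c * app n M \<psi> x)"
  by (simp add: app_def fun_eq_iff sum_distrib_left mult.assoc)

lemma app_scaled_vec: "app n M (\<lambda>x. c * \<psi> x) = (\<lambda>x. c * app n M \<psi> x)"
  by (simp add: app_def fun_eq_iff sum_distrib_left mult.left_commute)

lemma app_sum: "finite S \<Longrightarrow> app n M (\<lambda>x. \<Sum>u\<in>S. f u x) = (\<lambda>x. \<Sum>u\<in>S. app n M (f u) x)"
  by (simp add: app_def fun_eq_iff sum_distrib_left sum.swap[of _ S] if_distrib sum.If_cases)

lemma app_states: "app n M \<psi> \<in> states n"
  by (simp add: app_def states_def)

lemma scaled_app_states: "(\<lambda>x. c * app n M \<psi> x) \<in> states n"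
  by (simp add: app_def states_def)

lemma app_tensor_gI:
  assumes \<psi>: "\<psi> \<in> states n"
  shows "app n (tensor n (\<lambda>_. gI)) \<psi> = \<psi>"
proof (rule ext)
  fix x
  have delta: "tensor n (\<lambda>_. gI) x y = (if x = y then 1 else 0)" if "x \<in> bvecs n" "y \<in> bvecs n" for y
  proof (cases "x = y")
    case False
    then obtain i where "x i \<noteq> y i" by auto
    moreover have "i < n" using that \<open>x i \<noteq> y i\<close> by (auto simp: bvecs_def not_less[symmetric])
    ultimately show ?thesis using False by (auto simp: tensor_def gI_def intro!: prod_zero)
  qed (simp add: tensor_def gI_def)
  show "app n (tensor n (\<lambda>_. gI)) \<psi> x = \<psi> x"
  proof (cases "x \<in> bvecs n")
    case True
    have "(\<Sum>y\<in>bvecs n. tensor n (\<lambda>_. gI) x y * \<psi> y) = (\<Sum>y\<in>bvecs n. if x = y then \<psi> y else 0)"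
      using True by (intro sum.cong) (auto simp: delta)
    also have "\<dots> = \<psi> x" using True by (simp add: finite_bvecs)
    finally show ?thesis using True by (simp add: app_def)
  qed (use \<psi> in \<open>simp add: app_def states_def\<close>)
qed

definition bzero :: bits where "bzero = (\<lambda>_. False)"

lemma bzero_bvecs: "bzero \<in> bvecs n"
  by (simp add: bvecs_def bzero_def)

lemma bxor_bvecs: "a \<in> bvecs n \<Longrightarrow> b \<in> bvecs n \<Longrightarrow> bxor a b \<in> bvecs n"
  by (simp add: bvecs_def bxor_def)

lemma bxor_simps:
  "bxor a a = bzero" "bxor a bzero = a" "bxor bzero a = a"
  "bxor (bxor a b) c = bxor a (bxor b c)" "bxor a b = bxor b a" "bxor a (bxor a b) = b"
  by (auto simp: bxor_def bzero_def fun_eq_iff)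

lemma f2_subspace_bzero: "f2_subspace n A \<Longrightarrow> bzero \<in> A"
  by (simp add: f2_subspace_def bzero_def)

lemma f2_subspace_bxor: "f2_subspace n A \<Longrightarrow> a \<in> A \<Longrightarrow> b \<in> A \<Longrightarrow> bxor a b \<in> A"
  by (simp add: f2_subspace_def)

lemma f2_subspace_bvecs: "f2_subspace n A \<Longrightarrow> a \<in> A \<Longrightarrow> a \<in> bvecs n"
  by (auto simp: f2_subspace_def)

definition dot_sign :: "nat \<Rightarrow> bits \<Rightarrow> bits \<Rightarrow> complex" where
  "dot_sign n a b = (\<Prod>i<n. if a i \<and> b i then -1 else 1)"

lemma prod_sign_card:
  fixes n :: nat
  shows "(\<Prod>i<n. if P i then -1 else (1::'a::comm_ring_1)) = (if odd (card {i. i < n \<and> P i}) then -1 else 1)"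
proof (induction n)
  case (Suc n)
  show ?case
  proof (cases "P n")
    case True
    have "{i. i < Suc n \<and> P i} = insert n {i. i < n \<and> P i}" using True by auto
    then have "card {i. i < Suc n \<and> P i} = Suc (card {i. i < n \<and> P i})" by simp
    then show ?thesis using Suc True by (simp add: lessThan_Suc)
  next
    case False
    have "{i. i < Suc n \<and> P i} = {i. i < n \<and> P i}" using False less_Suc_eq by auto
    then show ?thesis using Suc False by (simp add: lessThan_Suc)
  qed
qed simp

lemma dot_sign_dotp: "dot_sign n a b = (if dotp n a b then -1 else 1)"
  by (simp add: dot_sign_def dotp_def prod_sign_card)

lemma dot_sign_eq_1_iff: "dot_sign n a b = 1 \<longleftrightarrow> \<not> dotp n a b"
  by (simp add: dot_sign_dotp)

lemma dot_sign_bxor_right: "dot_sign n a (bxor b c) = dot_sign n a b * dot_sign n a c"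
  by (simp add: dot_sign_def bxor_def prod.distrib[symmetric]) (intro prod.cong, auto)

lemma dot_sign_bzero: "dot_sign n bzero a = 1" "dot_sign n a bzero = 1"
  by (simp_all add: dot_sign_def bzero_def)

lemma dotp_commute: "dotp n a b = dotp n b a"
  by (simp add: dotp_def conj_commute)

lemma dotp_bxor_right: "dotp n a (bxor b c) = (dotp n a b \<noteq> dotp n a c)"
  using dot_sign_bxor_right[of n a b c] by (simp add: dot_sign_dotp split: if_splits)

lemma dotp_bxor_left: "dotp n (bxor b c) a = (dotp n b a \<noteq> dotp n c a)"
  using dotp_bxor_right dotp_commute by metis

lemma dotp_bzero: "\<not> dotp n bzero a" "\<not> dotp n a bzero"
  by (simp_all add: dotp_def bzero_def)

definition pauli_mono :: "nat \<Rightarrow> bits \<Rightarrow> bits \<Rightarrow> qmat" where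
  "pauli_mono n a b = tensor n (\<lambda>i. xz_gate (a i) (b i))"

lemma pauli_mono_mult:
  "mat_mult n (pauli_mono n a b) (pauli_mono n c d)
     = (\<lambda>x y. dot_sign n b c * pauli_mono n (bxor a c) (bxor b d) x y)"
  unfolding pauli_mono_def tensor_mult xz_gate_mult tensor_scaled dot_sign_def bxor_def by simp

lemma gpow_X_eq: "gpow n gX a = pauli_mono n a bzero"
  unfolding gpow_def pauli_mono_def
  by (rule tensor_cong) (auto simp: gX_def gI_def xz_gate_def bzero_def fun_eq_iff)

lemma gpow_Z_eq: "gpow n gZ b = pauli_mono n bzero b"
  unfolding gpow_def pauli_mono_def
  by (rule tensor_cong) (auto simp: gZ_def gI_def xz_gate_def bzero_def fun_eq_iff)

lemma XZ_eq_pauli_mono: "mat_mult n (gpow n gX a) (gpow n gZ b) = pauli_mono n a b"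
  unfolding gpow_X_eq gpow_Z_eq pauli_mono_mult by (simp add: bxor_simps dot_sign_bzero)

lemma pauli_mono_bzero: "pauli_mono n bzero bzero = tensor n (\<lambda>_. gI)"
  unfolding pauli_mono_def by (rule tensor_cong) (auto simp: gI_def xz_gate_def bzero_def fun_eq_iff)

lemma is_pauliE:
  assumes "is_pauli n M"
  obtains s a b where "s \<noteq> 0" "a \<in> bvecs n" "b \<in> bvecs n" "M = (\<lambda>x y. s * pauli_mono n a b x y)"
proof -
  obtain m a b where "a \<in> bvecs n" "b \<in> bvecs n"
    "M = (\<lambda>x y. \<i> ^ m * mat_mult n (gpow n gX a) (gpow n gZ b) x y)"
    using assms unfolding is_pauli_def by blast
  then show thesis using that[of "\<i> ^ m" a b] by (simp add: XZ_eq_pauli_mono)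
qed

lemma pauli_mono_entry:
  assumes x: "x \<in> bvecs n" and y: "y \<in> bvecs n" and a: "a \<in> bvecs n"
  shows "pauli_mono n a b x y = (if y = bxor x a then dot_sign n b y else 0)"
proof (cases "y = bxor x a")
  case True
  then show ?thesis by (simp add: pauli_mono_def tensor_def xz_gate_def dot_sign_def bxor_def)
next
  case False
  then obtain i where "y i \<noteq> bxor x a i" by auto
  moreover have "i < n"
    using x y a \<open>y i \<noteq> bxor x a i\<close> by (auto simp: bvecs_def bxor_def not_less[symmetric])
  ultimately show ?thesis
    using False by (auto simp: pauli_mono_def tensor_def xz_gate_def bxor_def intro!: prod_zero)
qed

lemma app_pauli_mono:
  assumes a: "a \<in> bvecs n"
  shows "app n (pauli_mono n a b) \<psi> x =
    (if x \<in> bvecs n then dot_sign n b (bxor x a) * \<psi> (bxor x a) else 0)"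
proof (cases "x \<in> bvecs n")
  case True
  have "(\<Sum>y\<in>bvecs n. pauli_mono n a b x y * \<psi> y)
      = (\<Sum>y\<in>bvecs n. if y = bxor x a then dot_sign n b (bxor x a) * \<psi> (bxor x a) else 0)"
    using True a by (intro sum.cong) (auto simp: pauli_mono_entry)
  also have "\<dots> = dot_sign n b (bxor x a) * \<psi> (bxor x a)"
    using True a by (simp add: finite_bvecs bxor_bvecs)
  finally show ?thesis using True by (simp add: app_def)
qed (simp add: app_def)

section \<open>Paulis acting on a CSS codespace\<close>

inductive_set f2_span :: "bits set \<Rightarrow> bits set" for S where
  f2_span_bzero: "bzero \<in> f2_span S"
| f2_span_bxor: "g \<in> S \<Longrightarrow> x \<in> f2_span S \<Longrightarrow> bxor g x \<in> f2_span S"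

lemma f2_span_mono: "x \<in> f2_span S \<Longrightarrow> x \<in> f2_span (insert g S)"
  by (induction rule: f2_span.induct) (auto intro: f2_span.intros)

lemma f2_span_closed: "x \<in> f2_span S \<Longrightarrow> y \<in> f2_span S \<Longrightarrow> bxor x y \<in> f2_span S"
  by (induction rule: f2_span.induct) (simp add: bxor_simps(3), metis bxor_simps(4) f2_span.f2_span_bxor)

lemma f2_span_base: "g \<in> S \<Longrightarrow> g \<in> f2_span S"
  using f2_span_bxor[OF _ f2_span_bzero, of g S] by (simp add: bxor_simps)

lemma dual_witness_list:
  "set gs \<subseteq> bvecs n \<Longrightarrow> v \<in> bvecs n \<Longrightarrow> v \<notin> f2_span (set gs) \<Longrightarrow>
   \<exists>w\<in>bvecs n. (\<forall>g\<in>set gs. \<not> dotp n w g) \<and> dotp n w v"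
proof (induction gs arbitrary: v)
  case Nil
  then have "v \<noteq> bzero" using f2_span_bzero by auto
  then obtain i where vi: "v i" by (auto simp: bzero_def)
  then have i: "i < n" using Nil by (auto simp: bvecs_def not_less[symmetric])
  have "{j. j < n \<and> j = i \<and> v j} = {i}" using i vi by auto
  then have "dotp n (\<lambda>j. j = i) v" by (simp add: dotp_def)
  moreover have "(\<lambda>j. j = i) \<in> bvecs n" using i by (auto simp: bvecs_def)
  ultimately show ?case by auto
next
  case (Cons g gs)
  have g: "g \<in> bvecs n" and gs: "set gs \<subseteq> bvecs n" using Cons by auto
  have n1: "v \<notin> f2_span (set gs)" using Cons(4) f2_span_mono by auto
  have n2: "bxor v g \<notin> f2_span (set gs)"
  proof
    assume "bxor v g \<in> f2_span (set gs)"
    then have "bxor (bxor v g) g \<in> f2_span (set (g # gs))"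
      using f2_span_mono f2_span_closed f2_span_base by (metis list.set_intros(1) list.simps(15))
    then show False using Cons(4) by (simp add: bxor_simps)
  qed
  obtain w1 where w1: "w1 \<in> bvecs n" "\<forall>h\<in>set gs. \<not> dotp n w1 h" "dotp n w1 v"
    using Cons.IH[OF gs Cons(3) n1] by blast
  obtain w2 where w2: "w2 \<in> bvecs n" "\<forall>h\<in>set gs. \<not> dotp n w2 h" "dotp n w2 (bxor v g)"
    using Cons.IH[OF gs bxor_bvecs[OF Cons(3) g] n2] by blast
  consider "\<not> dotp n w1 g" | "\<not> dotp n w2 g" | "dotp n w1 g" "dotp n w2 g" by blast
  then show ?case
  proof cases
    case 1
    then show ?thesis using w1 by auto
  next
    case 2
    then show ?thesis using w2 by (auto simp: dotp_bxor_right)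
  next
    case 3
    then show ?thesis using w1 w2
      by (intro bexI[of _ "bxor w1 w2"]) (auto simp: dotp_bxor_left dotp_bxor_right bxor_bvecs)
  qed
qed

lemma f2_subspace_dual_witness:
  assumes B: "f2_subspace n B" and b: "b \<in> bvecs n" "b \<notin> B"
  shows "\<exists>w\<in>bvecs n. (\<forall>b'\<in>B. \<not> dotp n w b') \<and> dotp n w b"
proof -
  have "finite B" using B finite_bvecs by (auto simp: f2_subspace_def intro: finite_subset)
  then obtain gs where gs: "set gs = B" using finite_list by blast
  have "x \<in> B" if "x \<in> f2_span B" for x
    using that by (induction rule: f2_span.induct) (use B in \<open>auto simp: f2_subspace_def bzero_def\<close>)
  then have "b \<notin> f2_span (set gs)" using b gs by auto
  moreover have "set gs \<subseteq> bvecs n" using gs B by (simp add: f2_subspace_def)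
  ultimately show ?thesis using dual_witness_list[OF _ b(1)] gs by auto
qed

definition coset_state :: "nat \<Rightarrow> bits set \<Rightarrow> bits \<Rightarrow> qvec" where
  "coset_state n A x0 = (\<lambda>y. if y \<in> bvecs n \<and> bxor y x0 \<in> A then 1 else 0)"

lemma coset_state_codespace:
  assumes css: "css_code n A B" and x0: "x0 \<in> bvecs n" and perp: "\<forall>b\<in>B. \<not> dotp n b x0"
  shows "coset_state n A x0 \<in> codespace n A B"
proof -
  have A: "f2_subspace n A" and orth: "\<forall>a\<in>A. \<forall>b\<in>B. \<not> dotp n a b"
    using css by (auto simp: css_code_def)
  have X: "app n (gpow n gX a) (coset_state n A x0) = coset_state n A x0" if a: "a \<in> A" for a
  proof
    fix x
    have ab: "a \<in> bvecs n" using f2_subspace_bvecs[OF A a] .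
    have "bxor (bxor x a) x0 \<in> A \<longleftrightarrow> bxor x x0 \<in> A"
    proof
      assume "bxor (bxor x a) x0 \<in> A"
      then have "bxor a (bxor (bxor x a) x0) \<in> A" using f2_subspace_bxor[OF A a] by blast
      then show "bxor x x0 \<in> A" by (metis bxor_simps(4,5,6))
    next
      assume "bxor x x0 \<in> A"
      then have "bxor a (bxor x x0) \<in> A" using f2_subspace_bxor[OF A a] by blast
      then show "bxor (bxor x a) x0 \<in> A" by (metis bxor_simps(4,5))
    qed
    then show "app n (gpow n gX a) (coset_state n A x0) x = coset_state n A x0 x"
      unfolding gpow_X_eq app_pauli_mono[OF ab]
      using ab by (auto simp: dot_sign_bzero coset_state_def bxor_bvecs)
  qed
  have Z: "app n (gpow n gZ b) (coset_state n A x0) = coset_state n A x0" if b: "b \<in> B" for b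
  proof
    fix x
    have "dot_sign n b x = 1" if "bxor x x0 \<in> A"
    proof -
      have "\<not> dotp n (bxor x x0) b" using orth that b by blast
      moreover have "dotp n b x = (dotp n b (bxor x x0) \<noteq> dotp n b x0)"
        by (metis bxor_simps(1,2,4) dotp_bxor_right)
      ultimately have "\<not> dotp n b x" using perp b by (simp add: dotp_commute)
      then show ?thesis by (simp add: dot_sign_dotp)
    qed
    then show "app n (gpow n gZ b) (coset_state n A x0) x = coset_state n A x0 x"
      unfolding gpow_Z_eq app_pauli_mono[OF bzero_bvecs] by (auto simp: coset_state_def bxor_simps)
  qed
  show ?thesis using X Z by (simp add: codespace_def coset_state_def states_def)
qed

lemma zero_coset_state_codespace: "css_code n A B \<Longrightarrow> coset_state n A bzero \<in> codespace n A B"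
  by (rule coset_state_codespace) (simp_all add: bzero_bvecs dotp_bzero)

text \<open>Evaluating on \<open>|A\<rangle>\<close> gives \<open>a \<in> A\<close>; if \<open>b \<notin> B\<close>, evaluating on \<open>|w + A\<rangle>\<close> for some \<open>w \<perp> B\<close>
  with \<open>w \<cdot> b = 1\<close> gives a contradiction.\<close>
lemma stabilizer_if_fixes_codespace:
  assumes css: "css_code n A B" and a: "a \<in> bvecs n" and b: "b \<in> bvecs n"
    and fixes_code: "\<forall>\<psi>\<in>codespace n A B. app n (\<lambda>x y. s * pauli_mono n a b x y) \<psi> = \<psi>"
  shows "a \<in> A \<and> b \<in> B"
proof -
  have A: "f2_subspace n A" and B: "f2_subspace n B"
    using css by (auto simp: css_code_def)
  have eq: "s * (dot_sign n b (bxor x a) * \<psi> (bxor x a)) = \<psi> x"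
    if "\<psi> \<in> codespace n A B" "x \<in> bvecs n" for \<psi> x
    using fun_cong[OF fixes_code[rule_format, OF that(1)], of x] that(2)
    unfolding app_scaled app_pauli_mono[OF a] by simp
  define \<psi>0 where "\<psi>0 = coset_state n A bzero"
  have e0: "s * (dot_sign n b a * \<psi>0 a) = 1"
    using eq[OF zero_coset_state_codespace[OF css] bzero_bvecs] f2_subspace_bzero[OF A]
    by (simp add: bxor_simps \<psi>0_def coset_state_def bzero_bvecs)
  then have "\<psi>0 a \<noteq> 0" by auto
  then have aA: "a \<in> A" by (simp add: \<psi>0_def coset_state_def bxor_simps split: if_splits)
  then have e0': "s * dot_sign n b a = 1" using e0 a by (simp add: \<psi>0_def coset_state_def bxor_simps)
  have "b \<in> B"
  proof (rule ccontr)
    assume "b \<notin> B"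
    then obtain w where w: "w \<in> bvecs n" "\<forall>b\<in>B. \<not> dotp n w b" "dotp n w b"
      using f2_subspace_dual_witness[OF B b] by blast
    have cw: "coset_state n A w \<in> codespace n A B"
      by (rule coset_state_codespace[OF css w(1)]) (use w(2) dotp_commute in metis)
    have "coset_state n A w (bxor w a) = 1" using aA a w(1)
      by (simp add: coset_state_def bxor_bvecs) (metis bxor_simps(4,5,6))
    moreover have "coset_state n A w w = 1"
      using w(1) f2_subspace_bzero[OF A] by (simp add: coset_state_def bxor_simps)
    ultimately have "s * (dot_sign n b w * dot_sign n b a) = 1"
      using eq[OF cw w(1)] by (simp add: dot_sign_bxor_right bxor_simps(5) ac_simps)
    then have "dot_sign n b w = 1" using e0' by (metis mult.left_commute mult.right_neutral)
    then show False using w(3) by (simp add: dot_sign_dotp dotp_commute)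
  qed
  then show ?thesis using aA by simp
qed

lemma stabilizer_if_equal_on_codespace:
  assumes css: "css_code n A B" and s: "s \<noteq> 0"
    and bv: "u \<in> bvecs n" "v \<in> bvecs n" "a \<in> bvecs n" "b \<in> bvecs n"
    and eq: "\<forall>\<psi>\<in>codespace n A B.
      app n (\<lambda>x y. s * pauli_mono n u v x y) \<psi> = app n (\<lambda>x y. t * pauli_mono n a b x y) \<psi>"
  shows "bxor u a \<in> A \<and> bxor v b \<in> B"
proof -
  let ?r = "t * dot_sign n v a / (s * dot_sign n v u)"
  have "app n (\<lambda>x y. ?r * pauli_mono n (bxor u a) (bxor v b) x y) \<psi> = \<psi>"
    if c: "\<psi> \<in> codespace n A B" for \<psi>
  proof -
    have st: "\<psi> \<in> states n" using c by (simp add: codespace_def)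
    have "app n (pauli_mono n u v) (app n (\<lambda>x y. s * pauli_mono n u v x y) \<psi>)
        = app n (pauli_mono n u v) (app n (\<lambda>x y. t * pauli_mono n a b x y) \<psi>)"
      using eq c by simp
    then have "(\<lambda>x. s * (dot_sign n v u * app n (pauli_mono n bzero bzero) \<psi> x))
       = (\<lambda>x. t * (dot_sign n v a * app n (pauli_mono n (bxor u a) (bxor v b)) \<psi> x))"
      unfolding app_scaled app_scaled_vec app_mult[symmetric] pauli_mono_mult by (simp add: bxor_simps)
    then have "(\<lambda>x. s * (dot_sign n v u * \<psi> x))
       = (\<lambda>x. t * (dot_sign n v a * app n (pauli_mono n (bxor u a) (bxor v b)) \<psi> x))"
      unfolding pauli_mono_bzero app_tensor_gI[OF st] .
    then show ?thesis
      unfolding app_scaled using s by (auto simp: fun_eq_iff field_simps dot_sign_dotp)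
  qed
  then show ?thesis
    using stabilizer_if_fixes_codespace[OF css bxor_bvecs[OF bv(1,3)] bxor_bvecs[OF bv(2,4)]] by blast
qed

text \<open>Both sides are multiples of \<open>X\<^sup>u\<^sup>1\<^sup>+\<^sup>u\<^sup>2 Z\<^sup>v\<^sup>1\<^sup>+\<^sup>v\<^sup>2 |A\<rangle>\<close>, whose entry at \<open>u1 + u2\<close> is 1.\<close>
lemma pauli_commutation_phase:
  assumes css: "css_code n A B" and bv: "u1 \<in> bvecs n" "u2 \<in> bvecs n"
    and L1: "L1 = (\<lambda>x y. s1 * pauli_mono n u1 v1 x y)" and L2: "L2 = (\<lambda>x y. s2 * pauli_mono n u2 v2 x y)"
    and s: "s1 * s2 \<noteq> 0"
    and eq: "app n L1 (app n L2 (coset_state n A bzero))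
      = (\<lambda>x. e * app n L2 (app n L1 (coset_state n A bzero)) x)"
  shows "dot_sign n v1 u2 = e * dot_sign n v2 u1"
proof -
  have A: "f2_subspace n A" using css by (simp add: css_code_def)
  define g where "g = bxor u1 u2"
  have g: "g \<in> bvecs n" using bv by (simp add: g_def bxor_bvecs)
  have val: "app n (pauli_mono n g d) (coset_state n A bzero) g = 1" for d
    unfolding app_pauli_mono[OF g] using g f2_subspace_bzero[OF A]
    by (simp add: bxor_simps coset_state_def bzero_bvecs dot_sign_bzero)
  have g2: "bxor u2 u1 = g" by (simp add: g_def bxor_simps)
  have "s1 * (s2 * (dot_sign n v1 u2 * app n (pauli_mono n g (bxor v1 v2)) (coset_state n A bzero) g))
     = e * (s2 * (s1 * (dot_sign n v2 u1 * app n (pauli_mono n g (bxor v2 v1)) (coset_state n A bzero) g)))"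
    using fun_cong[OF eq, of g]
    unfolding L1 L2 app_scaled app_scaled_vec app_mult[symmetric] pauli_mono_mult g2
    by (simp add: g_def)
  then show ?thesis using s unfolding val by (simp add: field_simps)
qed

section \<open>Conjugating Paulis by a 1-local Clifford circuit\<close>

definition clifford_circuit :: "nat \<Rightarrow> complex \<Rightarrow> (nat \<Rightarrow> vlabel) \<Rightarrow> (nat \<Rightarrow> gate) \<Rightarrow> qmat" where
  "clifford_circuit n c V Q = (\<lambda>x y. c * mat_mult n (tensor n (\<lambda>i. vgate (V i))) (tensor n Q) x y)"

definition conj_xs :: "nat \<Rightarrow> (nat \<Rightarrow> vlabel) \<Rightarrow> bits \<Rightarrow> bits \<Rightarrow> bits" where
  "conj_xs n V a b = (\<lambda>i. i < n \<and> conj_x (V i) (a i) (b i))"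

definition conj_zs :: "nat \<Rightarrow> (nat \<Rightarrow> vlabel) \<Rightarrow> bits \<Rightarrow> bits \<Rightarrow> bits" where
  "conj_zs n V a b = (\<lambda>i. i < n \<and> conj_z (V i) (a i) (b i))"

lemma conj_xs_bvecs: "conj_xs n V a b \<in> bvecs n"
  and conj_zs_bvecs: "conj_zs n V a b \<in> bvecs n"
  by (auto simp: conj_xs_def conj_zs_def bvecs_def)

lemma conj_xs_bxor: "conj_xs n V (bxor a a') (bxor b b') = bxor (conj_xs n V a b) (conj_xs n V a' b')"
  and conj_zs_bxor: "conj_zs n V (bxor a a') (bxor b b') = bxor (conj_zs n V a b) (conj_zs n V a' b')"
  by (auto simp: conj_xs_def conj_zs_def bxor_def conj_x_def conj_z_def fun_eq_iff)

lemma circuit_conj_pauli: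
  assumes Q: "\<forall>i<n. Q i \<in> {gI, gX, gY, gZ}"
  shows "\<exists>lam. \<forall>\<psi>. app n (pauli_mono n a b) (app n (clifford_circuit n c V Q) \<psi>)
           = app n (clifford_circuit n c V Q) (\<lambda>x. lam * app n (pauli_mono n (conj_xs n V a b) (conj_zs n V a b)) \<psi> x)"
proof -
  let ?G = "clifford_circuit n c V Q" and ?T = "pauli_mono n (conj_xs n V a b) (conj_zs n V a b)"
  define w where "w i = gmul (vgate (V i)) (Q i)" for i
  have G: "?G = (\<lambda>x y. c * tensor n w x y)"
    unfolding clifford_circuit_def tensor_mult w_def ..
  let ?P = "\<lambda>i. xz_gate (conj_x (V i) (a i) (b i)) (conj_z (V i) (a i) (b i))"
  define lf where "lf i = (SOME lam. gmul (xz_gate (a i) (b i)) (w i) = gmul (w i) (\<lambda>u v. lam * ?P i u v))"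
    for i
  have lf: "gmul (xz_gate (a i) (b i)) (w i) = gmul (w i) (\<lambda>u v. lf i * ?P i u v)" if "i < n" for i
  proof -
    have "\<exists>lam. gmul (xz_gate (a i) (b i)) (w i) = gmul (w i) (\<lambda>u v. lam * ?P i u v)"
      unfolding w_def using xz_gate_conj Q that by blast
    then show ?thesis unfolding lf_def by (rule someI_ex)
  qed
  have P: "tensor n ?P = ?T"
    unfolding pauli_mono_def by (rule tensor_cong) (simp add: conj_xs_def conj_zs_def)
  have "mat_mult n (pauli_mono n a b) (tensor n w) = tensor n (\<lambda>i. gmul (xz_gate (a i) (b i)) (w i))"
    unfolding pauli_mono_def tensor_mult ..
  also have "\<dots> = tensor n (\<lambda>i. gmul (w i) (\<lambda>u v. lf i * ?P i u v))"
    by (rule tensor_cong) (use lf in auto)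
  also have "\<dots> = mat_mult n (tensor n w) (tensor n (\<lambda>i u v. lf i * ?P i u v))"
    unfolding tensor_mult ..
  finally have swap: "mat_mult n (pauli_mono n a b) (tensor n w)
      = mat_mult n (tensor n w) (\<lambda>x y. (\<Prod>i<n. lf i) * ?T x y)"
    unfolding tensor_scaled P .
  have "app n (pauli_mono n a b) (app n ?G \<psi>) = (\<lambda>x. c * app n (mat_mult n (pauli_mono n a b) (tensor n w)) \<psi> x)"
    for \<psi> unfolding G app_mult mat_mult_scaleR app_scaled app_scaled_vec ..
  also have "\<dots> \<psi> = app n ?G (\<lambda>x. (\<Prod>i<n. lf i) * app n ?T \<psi> x)" for \<psi>
    unfolding swap G app_mult app_scaled ..
  finally show ?thesis by blast
qed

lemma circuit_app_inj:
  assumes Q: "\<forall>i<n. Q i \<in> {gI, gX, gY, gZ}" and c: "c \<noteq> 0"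
    and \<phi>: "\<phi>1 \<in> states n" "\<phi>2 \<in> states n"
    and eq: "app n (clifford_circuit n c V Q) \<phi>1 = app n (clifford_circuit n c V Q) \<phi>2"
  shows "\<phi>1 = \<phi>2"
proof -
  define w where "w i = gmul (vgate (V i)) (Q i)" for i
  define w' where "w' i = (SOME w'. gmul w' (w i) = gI)" for i
  have G: "clifford_circuit n c V Q = (\<lambda>x y. c * tensor n w x y)"
    unfolding clifford_circuit_def tensor_mult w_def ..
  have "gmul (w' i) (w i) = gI" if "i < n" for i
  proof -
    have "\<exists>w'. gmul w' (w i) = gI" unfolding w_def using clifford_gate_left_invertible Q that by blast
    then show ?thesis unfolding w'_def by (rule someI_ex)
  qed
  then have inv: "tensor n (\<lambda>i. gmul (w' i) (w i)) = tensor n (\<lambda>_. gI)"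
    by (rule tensor_cong)
  have left_inv: "app n (tensor n w') (app n (tensor n w) \<phi>) = \<phi>" if "\<phi> \<in> states n" for \<phi>
    unfolding app_mult[symmetric] tensor_mult inv using app_tensor_gI[OF that] .
  have "app n (tensor n w) \<phi>1 = app n (tensor n w) \<phi>2"
    using eq c unfolding G app_scaled by (simp add: fun_eq_iff)
  then show ?thesis using left_inv[OF \<phi>(1)] left_inv[OF \<phi>(2)] by metis
qed

definition preserves_stabilizers :: "nat \<Rightarrow> bits set \<Rightarrow> bits set \<Rightarrow> (nat \<Rightarrow> vlabel) \<Rightarrow> bool" where
  "preserves_stabilizers n A B V \<longleftrightarrow>
     (\<forall>a\<in>A. conj_xs n V a bzero \<in> A \<and> conj_zs n V a bzero \<in> B) \<and>
     (\<forall>b\<in>B. conj_xs n V bzero b \<in> A \<and> conj_zs n V bzero b \<in> B)"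

lemma circuit_stabilizer_conj:
  assumes Q: "\<forall>i<n. Q i \<in> {gI, gX, gY, gZ}" and c: "c \<noteq> 0"
    and css: "css_code n A B" and G: "logical_op n A B (clifford_circuit n c V Q)"
    and bv: "a \<in> bvecs n" "b \<in> bvecs n"
    and fixes_code: "\<forall>\<psi>\<in>codespace n A B. app n (pauli_mono n a b) \<psi> = \<psi>"
  shows "conj_xs n V a b \<in> A \<and> conj_zs n V a b \<in> B"
proof -
  let ?G = "clifford_circuit n c V Q" and ?P = "pauli_mono n (conj_xs n V a b) (conj_zs n V a b)"
  obtain lam where lam: "\<forall>\<psi>. app n (pauli_mono n a b) (app n ?G \<psi>) = app n ?G (\<lambda>x. lam * app n ?P \<psi> x)"
    using circuit_conj_pauli[OF Q] by blast
  have "app n (\<lambda>x y. lam * ?P x y) \<psi> = \<psi>" if \<psi>: "\<psi> \<in> codespace n A B" for \<psi>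
  proof -
    have "app n ?G \<psi> \<in> codespace n A B" using G \<psi> by (simp add: logical_op_def)
    then have "app n ?G (\<lambda>x. lam * app n ?P \<psi> x) = app n ?G \<psi>"
      using fixes_code lam by metis
    then have "(\<lambda>x. lam * app n ?P \<psi> x) = \<psi>"
      using \<psi> by (intro circuit_app_inj[OF Q c scaled_app_states]) (simp_all add: codespace_def)
    then show ?thesis by (simp add: app_scaled)
  qed
  then show ?thesis using stabilizer_if_fixes_codespace[OF css conj_xs_bvecs conj_zs_bvecs] by blast
qed

lemma circuit_preserves_stabilizers:
  assumes Q: "\<forall>i<n. Q i \<in> {gI, gX, gY, gZ}" and c: "c \<noteq> 0"
    and css: "css_code n A B" and G: "logical_op n A B (clifford_circuit n c V Q)"
  shows "preserves_stabilizers n A B V"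
proof -
  have A: "f2_subspace n A" and B: "f2_subspace n B" using css by (auto simp: css_code_def)
  show ?thesis
    unfolding preserves_stabilizers_def
    using circuit_stabilizer_conj[OF Q c css G f2_subspace_bvecs[OF A] bzero_bvecs]
      circuit_stabilizer_conj[OF Q c css G bzero_bvecs f2_subspace_bvecs[OF B]]
    by (simp add: codespace_def gpow_X_eq gpow_Z_eq)
qed

lemma preserves_stabilizersD:
  assumes pres: "preserves_stabilizers n A B V" and "f2_subspace n A" "f2_subspace n B"
    and "a \<in> A" "b \<in> B"
  shows "conj_xs n V a b \<in> A \<and> conj_zs n V a b \<in> B"
proof -
  have "conj_xs n V a b = bxor (conj_xs n V a bzero) (conj_xs n V bzero b)"
    "conj_zs n V a b = bxor (conj_zs n V a bzero) (conj_zs n V bzero b)"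
    using conj_xs_bxor[of n V a bzero bzero b] conj_zs_bxor[of n V a bzero bzero b]
    by (simp_all add: bxor_simps)
  then show ?thesis
    using assms f2_subspace_bxor[of n A] f2_subspace_bxor[of n B]
    by (simp add: preserves_stabilizers_def)
qed

definition fixed_mod_stabilizers ::
  "nat \<Rightarrow> bits set \<Rightarrow> bits set \<Rightarrow> (nat \<Rightarrow> vlabel) \<Rightarrow> bits \<Rightarrow> bits \<Rightarrow> bool" where
  "fixed_mod_stabilizers n A B V u v \<longleftrightarrow> bxor u (conj_xs n V u v) \<in> A \<and> bxor v (conj_zs n V u v) \<in> B"

lemma circuit_commuting_pauli_fixed:
  assumes Q: "\<forall>i<n. Q i \<in> {gI, gX, gY, gZ}" and c: "c \<noteq> 0" and css: "css_code n A B"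
    and s: "s \<noteq> 0" and bv: "u \<in> bvecs n" "v \<in> bvecs n"
    and L: "L = (\<lambda>x y. s * pauli_mono n u v x y)"
    and comm: "\<forall>\<psi>\<in>codespace n A B.
      app n (clifford_circuit n c V Q) (app n L \<psi>) = app n L (app n (clifford_circuit n c V Q) \<psi>)"
  shows "fixed_mod_stabilizers n A B V u v"
proof -
  let ?G = "clifford_circuit n c V Q" and ?P = "pauli_mono n (conj_xs n V u v) (conj_zs n V u v)"
  obtain lam where lam: "\<forall>\<psi>. app n (pauli_mono n u v) (app n ?G \<psi>) = app n ?G (\<lambda>x. lam * app n ?P \<psi> x)"
    using circuit_conj_pauli[OF Q] by blast
  have "app n L \<psi> = app n (\<lambda>x y. (s * lam) * ?P x y) \<psi>" if \<psi>: "\<psi> \<in> codespace n A B" for \<psi>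
  proof -
    have "app n ?G (app n L \<psi>) = app n L (app n ?G \<psi>)"
      using comm \<psi> by blast
    also have "\<dots> = app n ?G (app n (\<lambda>x y. (s * lam) * ?P x y) \<psi>)"
      unfolding L app_scaled lam[rule_format] app_scaled_vec by (simp add: mult.assoc)
    finally have "app n ?G (app n L \<psi>) = app n ?G (app n (\<lambda>x y. (s * lam) * ?P x y) \<psi>)" .
    then show ?thesis using circuit_app_inj[OF Q c app_states app_states] by blast
  qed
  then show ?thesis
    unfolding fixed_mod_stabilizers_def L
    using stabilizer_if_equal_on_codespace[OF css s bv conj_xs_bvecs conj_zs_bvecs] by blast
qed

section \<open>Logical Paulis and unaddressed logical qubits\<close>

definition in_centralizer :: "nat \<Rightarrow> bits set \<Rightarrow> bits set \<Rightarrow> bits \<Rightarrow> bits \<Rightarrow> bool" where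
  "in_centralizer n A B u v \<longleftrightarrow> (\<forall>a\<in>A. \<not> dotp n v a) \<and> (\<forall>b\<in>B. \<not> dotp n b u)"

definition symp_form :: "nat \<Rightarrow> bits \<Rightarrow> bits \<Rightarrow> bits \<Rightarrow> bits \<Rightarrow> bool" where
  "symp_form n u1 v1 u2 v2 \<longleftrightarrow> dotp n v1 u2 \<noteq> dotp n v2 u1"

lemma logical_pauli_in_centralizer:
  assumes css: "css_code n A B" and L: "L = (\<lambda>x y. s * pauli_mono n u v x y)"
    and s: "s \<noteq> 0" and u: "u \<in> bvecs n"
    and L_code: "\<forall>\<phi>\<in>codespace n A B. app n L \<phi> \<in> codespace n A B"
  shows "in_centralizer n A B u v"
proof -
  have A: "f2_subspace n A" and B: "f2_subspace n B" using css by (auto simp: css_code_def)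
  let ?\<psi>0 = "coset_state n A bzero"
  have commute: "app n S (app n L ?\<psi>0) = (\<lambda>x. 1 * app n L (app n S ?\<psi>0) x)"
    if "\<forall>\<phi>\<in>codespace n A B. app n S \<phi> = \<phi>" for S
    using that L_code zero_coset_state_codespace[OF css] by simp
  have "dot_sign n bzero u = 1 * dot_sign n v a" if a: "a \<in> A" for a
  proof (rule pauli_commutation_phase[OF css f2_subspace_bvecs[OF A a] u _ L])
    show "gpow n gX a = (\<lambda>x y. 1 * pauli_mono n a bzero x y)" by (simp add: gpow_X_eq)
    show "app n (gpow n gX a) (app n L ?\<psi>0) = (\<lambda>x. 1 * app n L (app n (gpow n gX a) ?\<psi>0) x)"
      using a by (intro commute) (simp add: codespace_def)
  qed (use s in simp)
  moreover have "dot_sign n b u = 1 * dot_sign n v bzero" if b: "b \<in> B" for b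
  proof (rule pauli_commutation_phase[OF css bzero_bvecs u _ L])
    show "gpow n gZ b = (\<lambda>x y. 1 * pauli_mono n bzero b x y)" by (simp add: gpow_Z_eq)
    show "app n (gpow n gZ b) (app n L ?\<psi>0) = (\<lambda>x. 1 * app n L (app n (gpow n gZ b) ?\<psi>0) x)"
      using b by (intro commute) (simp add: codespace_def)
  qed (use s in simp)
  ultimately show ?thesis
    by (simp add: in_centralizer_def dot_sign_bzero dot_sign_eq_1_iff)
qed

lemma logical_paulis_symplectic:
  assumes css: "css_code n A B" and lp: "logical_paulis n A B k LX LZ" and j: "j < k"
  obtains s1 u1 v1 s2 u2 v2 where
    "s1 \<noteq> 0" "u1 \<in> bvecs n" "v1 \<in> bvecs n" "LX j = (\<lambda>x y. s1 * pauli_mono n u1 v1 x y)"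
    "s2 \<noteq> 0" "u2 \<in> bvecs n" "v2 \<in> bvecs n" "LZ j = (\<lambda>x y. s2 * pauli_mono n u2 v2 x y)"
    "in_centralizer n A B u1 v1" "in_centralizer n A B u2 v2" "symp_form n u1 v1 u2 v2"
proof -
  have ops: "is_pauli n (LX j)" "is_pauli n (LZ j)" "logical_op n A B (LX j)" "logical_op n A B (LZ j)"
    using lp j by (simp_all add: logical_paulis_def)
  obtain s1 u1 v1 where P1: "s1 \<noteq> 0" "u1 \<in> bvecs n" "v1 \<in> bvecs n"
      "LX j = (\<lambda>x y. s1 * pauli_mono n u1 v1 x y)"
    using is_pauliE[OF ops(1)] by blast
  obtain s2 u2 v2 where P2: "s2 \<noteq> 0" "u2 \<in> bvecs n" "v2 \<in> bvecs n"
      "LZ j = (\<lambda>x y. s2 * pauli_mono n u2 v2 x y)"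
    using is_pauliE[OF ops(2)] by blast
  have "app n (LX j) (app n (LZ j) (coset_state n A bzero))
      = (\<lambda>x. (-1) * app n (LZ j) (app n (LX j) (coset_state n A bzero)) x)"
    using lp j zero_coset_state_codespace[OF css] by (simp add: logical_paulis_def fun_eq_iff)
  then have "dot_sign n v1 u2 = (-1) * dot_sign n v2 u1"
    using P1 P2 by (intro pauli_commutation_phase[OF css P1(2) P2(2) P1(4) P2(4)]) simp_all
  then have "symp_form n u1 v1 u2 v2"
    by (auto simp: symp_form_def dot_sign_dotp split: if_splits)
  moreover have "in_centralizer n A B u1 v1" "in_centralizer n A B u2 v2"
    using logical_pauli_in_centralizer[OF css P1(4,1,2)] logical_pauli_in_centralizer[OF css P2(4,1,2)]
      ops(3,4) by (simp_all add: logical_op_def)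
  ultimately show thesis using that P1 P2 by blast
qed

lemma addr_set_unaddressed:
  assumes "addr_set k p I"
  obtains j where "j < k" "j \<notin> (\<Union>t\<in>I. set t)"
proof -
  have "(\<Union>t\<in>I. set t) \<subset> {0..<k}" using assms by (auto simp: addr_set_def)
  then obtain j where "j \<in> {0..<k}" "j \<notin> (\<Union>t\<in>I. set t)" by blast
  then show thesis using that by simp
qed

definition flip :: "nat \<Rightarrow> bits \<Rightarrow> bits" where "flip j x = x(j := \<not> x j)"

lemma sum_bvecs_flip:
  assumes "j < k"
  shows "(\<Sum>x\<in>bvecs k. g (flip j x)) = (\<Sum>x\<in>bvecs k. g x)"
  by (rule sum.reindex_bij_witness[of _ "flip j" "flip j"]) (use assms in \<open>auto simp: flip_def bvecs_def\<close>)

lemma addr_target_eq_0: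
  assumes j: "j \<notin> (\<Union>t\<in>I. set t)" "j < k" and xy: "x j \<noteq> y j"
  shows "addr_target k p U I x y = 0"
  using assms unfolding addr_target_def by (subst prod_zero[of _ "\<lambda>i. if x i = y i then 1 else 0"]) auto

lemma addr_target_flip:
  assumes I: "addr_set k p I" and j: "j \<notin> (\<Union>t\<in>I. set t)"
  shows "addr_target k p U I (flip j x) (flip j y) = addr_target k p U I x y"
proof -
  have "(\<lambda>l. l < p \<and> flip j x (t ! l)) = (\<lambda>l. l < p \<and> x (t ! l))" if "t \<in> I" for t x
  proof
    fix l
    have "l < p \<Longrightarrow> t ! l \<noteq> j" using I that j by (auto simp: addr_set_def)
    then show "(l < p \<and> flip j x (t ! l)) = (l < p \<and> x (t ! l))" by (auto simp: flip_def)
  qed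
  moreover have "(if flip j x i = flip j y i then 1 else 0) = (if x i = y i then 1 else (0::complex))" for i
    by (auto simp: flip_def)
  ultimately show ?thesis unfolding addr_target_def by (simp cong: prod.cong)
qed

lemma pauli_mono_eq_0:
  assumes "j < k" "a j" "x j = y j"
  shows "pauli_mono k a b x y = 0"
  unfolding pauli_mono_def tensor_def using assms
  by (intro prod_zero) (auto simp: xz_gate_def intro!: bexI[of _ j])

lemma pauli_mono_flip:
  assumes j: "j < k" and a: "\<not> a j" and b: "b j"
  shows "pauli_mono k a b (flip j x) (flip j y) = - pauli_mono k a b x y"
proof -
  have "(\<Prod>i\<in>{..<k} - {j}. xz_gate (a i) (b i) (flip j x i) (flip j y i))
      = (\<Prod>i\<in>{..<k} - {j}. xz_gate (a i) (b i) (x i) (y i))"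
    by (intro prod.cong) (auto simp: flip_def)
  moreover have "xz_gate (a j) (b j) (flip j x j) (flip j y j) = - xz_gate (a j) (b j) (x j) (y j)"
    using a b by (auto simp: flip_def xz_gate_def)
  ultimately show ?thesis
    unfolding pauli_mono_def tensor_def using j by (simp add: prod.remove[of "{..<k}" j])
qed

text \<open>Pauli components touching an unaddressed qubit \<open>j\<close> vanish: an \<open>X\<^sub>j\<close>-factor meets the
  identity on qubit \<open>j\<close>, and a pure \<open>Z\<^sub>j\<close>-factor changes sign under flipping bit \<open>j\<close>.\<close>
lemma pauli_coeff_addr_target_eq_0:
  assumes I: "addr_set k p I" and j: "j < k" "j \<notin> (\<Union>t\<in>I. set t)" and uv: "u j \<or> v j"
  shows "pauli_coeff k (addr_target k p U I) u v = 0"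
proof -
  define f where "f x y = cnj (pauli_mono k u v x y) * addr_target k p U I x y" for x y
  have "(\<Sum>x\<in>bvecs k. \<Sum>y\<in>bvecs k. f x y) = 0"
  proof (cases "u j")
    case True
    have "f x y = 0" for x y
      using pauli_mono_eq_0[where a=u, OF j(1) True] addr_target_eq_0[OF j(2,1)] by (cases "x j = y j") (simp_all add: f_def)
    then show ?thesis by simp
  next
    case False
    then have flip_f: "f (flip j x) (flip j y) = - f x y" for x y
      using uv by (simp add: f_def addr_target_flip[OF I j(2)] pauli_mono_flip[OF j(1)])
    have "(\<Sum>x\<in>bvecs k. \<Sum>y\<in>bvecs k. f (flip j x) (flip j y)) = (\<Sum>x\<in>bvecs k. \<Sum>y\<in>bvecs k. f (flip j x) y)"
      by (intro sum.cong refl sum_bvecs_flip[OF j(1)])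
    also have "\<dots> = (\<Sum>x\<in>bvecs k. \<Sum>y\<in>bvecs k. f x y)"
      by (rule sum_bvecs_flip[OF j(1), of "\<lambda>x. \<Sum>y\<in>bvecs k. f x y"])
    finally have "(\<Sum>x\<in>bvecs k. \<Sum>y\<in>bvecs k. f x y) = (\<Sum>x\<in>bvecs k. \<Sum>y\<in>bvecs k. f (flip j x) (flip j y))" ..
    also have "\<dots> = - (\<Sum>x\<in>bvecs k. \<Sum>y\<in>bvecs k. f x y)"
      by (simp add: flip_f sum_negf)
    finally show ?thesis by simp
  qed
  then show ?thesis unfolding pauli_coeff_def XZ_eq_pauli_mono f_def by simp
qed

lemma lprod_closed:
  assumes "\<forall>l<k. \<forall>\<phi>\<in>C. app n (L l) \<phi> \<in> C" and "\<psi> \<in> C" and "m \<le> k"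
  shows "lprod n L u m \<psi> \<in> C"
  using assms by (induction m) auto

lemma lprod_commute:
  assumes L: "\<forall>l<k. \<forall>\<phi>\<in>C. app n (L l) \<phi> \<in> C" and \<psi>: "\<psi> \<in> C"
    and comm: "\<forall>l<k. u l \<longrightarrow> (\<forall>\<phi>\<in>C. app n (L l) (app n M \<phi>) = app n M (app n (L l) \<phi>))"
    and "m \<le> k"
  shows "lprod n L u m (app n M \<psi>) = app n M (lprod n L u m \<psi>)"
  using \<open>m \<le> k\<close>
proof (induction m)
  case (Suc m)
  then show ?case using lprod_closed[OF L \<psi>, where u=u and m=m] comm by auto
qed simp

lemma logical_action_commute:
  assumes act: "has_logical_action n A B k LX LZ G W"
    and coeff: "\<forall>u\<in>bvecs k. \<forall>v\<in>bvecs k. pauli_coeff k W u v \<noteq> 0 \<longrightarrow> \<not> u j \<and> \<not> v j"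
    and LX: "\<forall>l<k. \<forall>\<phi>\<in>codespace n A B. app n (LX l) \<phi> \<in> codespace n A B"
    and LZ: "\<forall>l<k. \<forall>\<phi>\<in>codespace n A B. app n (LZ l) \<phi> \<in> codespace n A B"
    and M: "\<forall>\<phi>\<in>codespace n A B. app n M \<phi> \<in> codespace n A B"
    and commX: "\<forall>l<k. l \<noteq> j \<longrightarrow>
      (\<forall>\<phi>\<in>codespace n A B. app n (LX l) (app n M \<phi>) = app n M (app n (LX l) \<phi>))"
    and commZ: "\<forall>l<k. l \<noteq> j \<longrightarrow>
      (\<forall>\<phi>\<in>codespace n A B. app n (LZ l) (app n M \<phi>) = app n M (app n (LZ l) \<phi>))"
    and \<psi>: "\<psi> \<in> codespace n A B"
  shows "app n G (app n M \<psi>) = app n M (app n G \<psi>)"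
proof -
  let ?C = "codespace n A B" and ?L = "logical_pauli_app n k LX LZ"
  have G: "app n G \<phi> = (\<lambda>x. \<Sum>u\<in>bvecs k. \<Sum>v\<in>bvecs k. pauli_coeff k W u v * ?L u v \<phi> x)"
    if "\<phi> \<in> ?C" for \<phi> using act that by (simp add: has_logical_action_def)
  have summand: "pauli_coeff k W u v * ?L u v (app n M \<psi>) x = pauli_coeff k W u v * app n M (?L u v \<psi>) x"
    if uv: "u \<in> bvecs k" "v \<in> bvecs k" for u v x
  proof (cases "pauli_coeff k W u v = 0")
    case False
    then have "\<not> u j" "\<not> v j" using coeff uv by auto
    then have cX: "\<forall>l<k. u l \<longrightarrow> (\<forall>\<phi>\<in>?C. app n (LX l) (app n M \<phi>) = app n M (app n (LX l) \<phi>))"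
      and cZ: "\<forall>l<k. v l \<longrightarrow> (\<forall>\<phi>\<in>?C. app n (LZ l) (app n M \<phi>) = app n M (app n (LZ l) \<phi>))"
      using commX commZ by metis+
    have "lprod n LZ v k (app n M \<psi>) = app n M (lprod n LZ v k \<psi>)"
      and "lprod n LX u k (app n M (lprod n LZ v k \<psi>)) = app n M (lprod n LX u k (lprod n LZ v k \<psi>))"
      using lprod_commute[OF LZ \<psi> cZ order_refl]
        lprod_commute[OF LX lprod_closed[OF LZ \<psi> order_refl] cX order_refl] .
    then show ?thesis unfolding logical_pauli_app_def by simp
  qed simp
  have "app n G (app n M \<psi>)
      = (\<lambda>x. \<Sum>u\<in>bvecs k. \<Sum>v\<in>bvecs k. pauli_coeff k W u v * ?L u v (app n M \<psi>) x)"
    using G M \<psi> by blast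
  also have "\<dots> = (\<lambda>x. \<Sum>u\<in>bvecs k. \<Sum>v\<in>bvecs k. pauli_coeff k W u v * app n M (?L u v \<psi>) x)"
    using summand by (intro ext sum.cong refl) auto
  also have "\<dots> = app n M (app n G \<psi>)"
    unfolding G[OF \<psi>] by (simp add: app_sum app_scaled_vec finite_bvecs)
  finally show ?thesis .
qed

lemma circuit_commutes_with_unaddressed_logicals:
  assumes act: "has_logical_action n A B k LX LZ G (addr_target k p U I)"
    and lp: "logical_paulis n A B k LX LZ" and I: "addr_set k p I"
    and j: "j < k" "j \<notin> (\<Union>t\<in>I. set t)" and \<psi>: "\<psi> \<in> codespace n A B"
  shows "app n G (app n (LX j) \<psi>) = app n (LX j) (app n G \<psi>)"
    and "app n G (app n (LZ j) \<psi>) = app n (LZ j) (app n G \<psi>)"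
proof -
  have coeff: "\<forall>u\<in>bvecs k. \<forall>v\<in>bvecs k. pauli_coeff k (addr_target k p U I) u v \<noteq> 0 \<longrightarrow> \<not> u j \<and> \<not> v j"
    using pauli_coeff_addr_target_eq_0[OF I j] by blast
  have code: "\<forall>l<k. \<forall>\<phi>\<in>codespace n A B. app n (LX l) \<phi> \<in> codespace n A B"
      "\<forall>l<k. \<forall>\<phi>\<in>codespace n A B. app n (LZ l) \<phi> \<in> codespace n A B"
    using lp by (simp_all add: logical_paulis_def logical_op_def)
  note rel = lp[unfolded logical_paulis_def, THEN conjunct2, THEN conjunct2, rule_format]
  show "app n G (app n (LX j) \<psi>) = app n (LX j) (app n G \<psi>)"
    by (rule logical_action_commute[OF act coeff code _ _ _ \<psi>])
      (use code j rel in \<open>auto simp: logical_op_def\<close>)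
  show "app n G (app n (LZ j) \<psi>) = app n (LZ j) (app n G \<psi>)"
    by (rule logical_action_commute[OF act coeff code _ _ _ \<psi>])
      (use code j rel in \<open>auto simp: logical_op_def\<close>)
qed

section \<open>Consequences of non-splitting\<close>

definition brestrict :: "bits \<Rightarrow> nat set \<Rightarrow> bits" where
  "brestrict a h = (\<lambda>i. a i \<and> i \<in> h)"

lemma splits_on_if_restrict_closed:
  assumes A: "f2_subspace n A" and restr: "\<forall>a\<in>A. brestrict a h \<in> A"
  shows "splits_on n A h"
proof -
  define A1 where "A1 = {a\<in>A. \<forall>i. a i \<longrightarrow> i \<in> h}"
  define A2 where "A2 = {a\<in>A. \<forall>i. a i \<longrightarrow> i \<notin> h}"
  have "f2_subspace n A1" "f2_subspace n A2"
    using A unfolding A1_def A2_def f2_subspace_def by (auto simp: bxor_def)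
  moreover have "A = {bxor a1 a2 | a1 a2. a1 \<in> A1 \<and> a2 \<in> A2}"
  proof
    show "A \<subseteq> {bxor a1 a2 | a1 a2. a1 \<in> A1 \<and> a2 \<in> A2}"
    proof
      fix a assume a: "a \<in> A"
      have "brestrict a h \<in> A1" using restr a by (auto simp: A1_def brestrict_def)
      moreover have "bxor a (brestrict a h) \<in> A2"
        using f2_subspace_bxor[OF A a] restr a by (auto simp: A2_def) (auto simp: bxor_def brestrict_def)
      moreover have "a = bxor (brestrict a h) (bxor a (brestrict a h))"
        by (auto simp: bxor_def brestrict_def fun_eq_iff)
      ultimately show "a \<in> {bxor a1 a2 | a1 a2. a1 \<in> A1 \<and> a2 \<in> A2}" by blast
    qed
    show "{bxor a1 a2 | a1 a2. a1 \<in> A1 \<and> a2 \<in> A2} \<subseteq> A"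
      using f2_subspace_bxor[OF A] by (auto simp: A1_def A2_def)
  qed
  ultimately show ?thesis unfolding splits_on_def A1_def A2_def by blast
qed

lemma non_splitting_restrict_closed:
  assumes "non_splitting n A B" "f2_subspace n A" "f2_subspace n B"
    and "h \<noteq> {}" "h \<subseteq> {0..<n}" "\<forall>a\<in>A. brestrict a h \<in> A" "\<forall>b\<in>B. brestrict b h \<in> B"
  shows "h = {0..<n}"
  using assms splits_on_if_restrict_closed[of n A h] splits_on_if_restrict_closed[of n B h]
  unfolding non_splitting_def by blast

text \<open>The \<open>Z\<close>-part of \<open>T\<^sup>2 (a, 0)\<close> and the \<open>X\<close>-part of \<open>T\<^sup>2 (0, b)\<close> are \<open>a\<close> and \<open>b\<close> restricted
  to the qubits where \<open>T\<close> has order 3.\<close>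
lemma restrict_PH_HP_swaps_stabilizers:
  assumes A: "f2_subspace n A" and B: "f2_subspace n B" and pres: "preserves_stabilizers n A B V"
  defines "h \<equiv> {i. i < n \<and> V i \<in> {VPH, VHP}}"
  shows "a \<in> A \<Longrightarrow> brestrict a h \<in> B" and "b \<in> B \<Longrightarrow> brestrict b h \<in> A"
proof -
  assume a: "a \<in> A"
  have "conj_zs n V (conj_xs n V a bzero) (conj_zs n V a bzero) = brestrict a h"
  proof
    fix l show "conj_zs n V (conj_xs n V a bzero) (conj_zs n V a bzero) l = brestrict a h l"
      using f2_subspace_bvecs[OF A a] by (cases "V l")
        (auto simp: conj_xs_def conj_zs_def conj_x_def conj_z_def brestrict_def h_def bzero_def bvecs_def)
  qed
  moreover have "conj_xs n V a bzero \<in> A" "conj_zs n V a bzero \<in> B"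
    using pres a by (simp_all add: preserves_stabilizers_def)
  note preserves_stabilizersD[OF pres A B this]
  ultimately show "brestrict a h \<in> B" by simp
next
  assume b: "b \<in> B"
  have "conj_xs n V (conj_xs n V bzero b) (conj_zs n V bzero b) = brestrict b h"
  proof
    fix l show "conj_xs n V (conj_xs n V bzero b) (conj_zs n V bzero b) l = brestrict b h l"
      using f2_subspace_bvecs[OF B b] by (cases "V l")
        (auto simp: conj_xs_def conj_zs_def conj_x_def conj_z_def brestrict_def h_def bzero_def bvecs_def)
  qed
  moreover have "conj_xs n V bzero b \<in> A" "conj_zs n V bzero b \<in> B"
    using pres b by (simp_all add: preserves_stabilizers_def)
  note preserves_stabilizersD[OF pres A B this]
  ultimately show "brestrict b h \<in> A" by simp
qed

text \<open>If every qubit is \<open>PH\<close> or \<open>HP\<close>, then \<open>T\<^sup>2 + T + 1 = 0\<close>.\<close>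
lemma conj_PH_HP_order3:
  assumes all: "\<forall>i<n. V i \<in> {VPH, VHP}" and uv: "u \<in> bvecs n" "v \<in> bvecs n"
  defines "a \<equiv> bxor (conj_xs n V u v) u" and "b \<equiv> bxor (conj_zs n V u v) v"
  shows "conj_xs n V a b = u" and "conj_zs n V a b = v"
proof -
  have "conj_xs n V a b l = u l \<and> conj_zs n V a b l = v l" for l
    using uv all by (cases "l < n"; cases "V l")
      (auto simp: a_def b_def conj_xs_def conj_zs_def conj_x_def conj_z_def bxor_def bvecs_def)
  then show "conj_xs n V a b = u" "conj_zs n V a b = v" by (simp_all add: fun_eq_iff)
qed

lemma fixed_mod_stabilizers_PH_HP:
  assumes A: "f2_subspace n A" and B: "f2_subspace n B" and ns: "non_splitting n A B"
    and pres: "preserves_stabilizers n A B V" and i: "i < n" "V i \<in> {VPH, VHP}"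
    and uv: "u \<in> bvecs n" "v \<in> bvecs n" and fixed: "fixed_mod_stabilizers n A B V u v"
  shows "u \<in> A \<and> v \<in> B"
proof -
  define h where "h = {i. i < n \<and> V i \<in> {VPH, VHP}}"
  note swap = restrict_PH_HP_swaps_stabilizers[OF A B pres, folded h_def]
  have idem: "brestrict (brestrict a h) h = brestrict a h" for a
    by (auto simp: brestrict_def)
  have "h = {0..<n}"
  proof (rule non_splitting_restrict_closed[OF ns A B])
    show "h \<noteq> {}" "h \<subseteq> {0..<n}" using i by (auto simp: h_def)
    show "\<forall>a\<in>A. brestrict a h \<in> A" "\<forall>b\<in>B. brestrict b h \<in> B" using swap idem by metis+
  qed
  then have "l \<in> h" if "l < n" for l
    using that by simp
  then have all: "\<forall>l<n. V l \<in> {VPH, VHP}"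
    unfolding h_def by blast
  have "bxor (conj_xs n V u v) u \<in> A" "bxor (conj_zs n V u v) v \<in> B"
    using fixed by (simp_all add: fixed_mod_stabilizers_def bxor_simps(5))
  note preserves_stabilizersD[OF pres A B this]
  then show ?thesis unfolding conj_PH_HP_order3[OF all uv] .
qed

lemma all_H_if_some_H:
  assumes A: "f2_subspace n A" and B: "f2_subspace n B" and ns: "non_splitting n A B"
    and pres: "preserves_stabilizers n A B V" and no_PH_HP: "\<forall>i<n. V i \<notin> {VPH, VHP}"
    and i: "i < n" "V i = VH"
  shows "\<forall>l<n. V l = VH"
proof -
  define h where "h = {i. i < n \<and> V i = VH}"
  have "bxor a (conj_xs n V a bzero) = brestrict a h" if "a \<in> A" for a
  proof
    fix l show "bxor a (conj_xs n V a bzero) l = brestrict a h l"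
      using f2_subspace_bvecs[OF A that] no_PH_HP by (cases "l < n"; cases "V l")
        (auto simp: conj_xs_def conj_x_def brestrict_def h_def bzero_def bvecs_def bxor_def)
  qed
  moreover have "conj_xs n V a bzero \<in> A" if "a \<in> A" for a
    using pres that by (simp add: preserves_stabilizers_def)
  ultimately have AA: "brestrict a h \<in> A" if "a \<in> A" for a
    using that f2_subspace_bxor[OF A] by metis
  have "bxor b (conj_zs n V bzero b) = brestrict b h" if "b \<in> B" for b
  proof
    fix l show "bxor b (conj_zs n V bzero b) l = brestrict b h l"
      using f2_subspace_bvecs[OF B that] no_PH_HP by (cases "l < n"; cases "V l")
        (auto simp: conj_zs_def conj_z_def brestrict_def h_def bzero_def bvecs_def bxor_def)
  qed
  moreover have "conj_zs n V bzero b \<in> B" if "b \<in> B" for b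
    using pres that by (simp add: preserves_stabilizers_def)
  ultimately have BB: "brestrict b h \<in> B" if "b \<in> B" for b
    using that f2_subspace_bxor[OF B] by metis
  have "h = {0..<n}"
  proof (rule non_splitting_restrict_closed[OF ns A B])
    show "h \<noteq> {}" "h \<subseteq> {0..<n}" using i by (auto simp: h_def)
  qed (use AA BB in blast)+
  then have "l \<in> h" if "l < n" for l
    using that by simp
  then show ?thesis unfolding h_def by blast
qed

text \<open>For \<open>V = H\<^sup>\<otimes>\<^sup>n\<close>, being fixed modulo stabilizers means \<open>u + v \<in> B\<close>, and then the symplectic
  form of two such pairs reduces to \<open>u\<^sub>1 \<cdot> u\<^sub>2\<close> from both sides.\<close>
lemma symp_form_fixed_all_H:
  assumes all_H: "\<forall>i<n. V i = VH" and uv: "u1 \<in> bvecs n" "u2 \<in> bvecs n"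
    and fixed: "fixed_mod_stabilizers n A B V u1 v1" "fixed_mod_stabilizers n A B V u2 v2"
    and cent: "in_centralizer n A B u1 v1" "in_centralizer n A B u2 v2"
  shows "\<not> symp_form n u1 v1 u2 v2"
proof -
  have conj_zs_H: "conj_zs n V u w = u" if "u \<in> bvecs n" for u w
  proof
    fix l show "conj_zs n V u w l = u l"
      using that all_H by (cases "l < n") (auto simp: conj_zs_def conj_z_def bvecs_def)
  qed
  have "bxor u1 v1 \<in> B" "bxor u2 v2 \<in> B"
    using fixed conj_zs_H[OF uv(1)] conj_zs_H[OF uv(2)]
    by (simp_all add: fixed_mod_stabilizers_def bxor_simps(5))
  then have "\<not> dotp n (bxor u1 v1) u2" "\<not> dotp n (bxor u2 v2) u1"
    using cent by (simp_all add: in_centralizer_def)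
  then have "dotp n v1 u2 = dotp n u1 u2" "dotp n v2 u1 = dotp n u1 u2"
    using dotp_commute[of n u2 u1] by (simp_all add: dotp_bxor_left)
  then show ?thesis by (simp add: symp_form_def)
qed

lemma no_H_PH_HP:
  assumes A: "f2_subspace n A" and B: "f2_subspace n B" and ns: "non_splitting n A B"
    and pres: "preserves_stabilizers n A B V"
    and uv: "u1 \<in> bvecs n" "v1 \<in> bvecs n" "u2 \<in> bvecs n"
    and fixed: "fixed_mod_stabilizers n A B V u1 v1" "fixed_mod_stabilizers n A B V u2 v2"
    and cent: "in_centralizer n A B u1 v1" "in_centralizer n A B u2 v2"
    and symp: "symp_form n u1 v1 u2 v2"
  shows "\<forall>i<n. V i \<notin> {VH, VPH, VHP}"
proof -
  have no_PH_HP: "\<forall>i<n. V i \<notin> {VPH, VHP}"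
  proof (intro allI impI notI)
    fix i assume "i < n" "V i \<in> {VPH, VHP}"
    then have "u1 \<in> A" "v1 \<in> B"
      using fixed_mod_stabilizers_PH_HP[OF A B ns pres _ _ uv(1,2) fixed(1)] by blast+
    then show False using symp cent(2) by (simp add: symp_form_def in_centralizer_def)
  qed
  moreover have "V i \<noteq> VH" if "i < n" for i
  proof
    assume "V i = VH"
    then have "\<forall>l<n. V l = VH" by (rule all_H_if_some_H[OF A B ns pres no_PH_HP that])
    then show False using symp_form_fixed_all_H[OF _ uv(1,3) fixed cent] symp by blast
  qed
  ultimately show ?thesis by blast
qed

theorem proposition8:
  fixes n k p :: nat and A B :: "bits set" and LX LZ :: "nat \<Rightarrow> qmat"
    and U :: qmat and I :: "nat list set"
    and V :: "nat \<Rightarrow> vlabel" and Q :: "nat \<Rightarrow> gate" and c :: complex and G :: qmat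
  assumes css: "css_code n A B"
    and nonsplit: "non_splitting n A B"
    and lpaulis: "logical_paulis n A B k LX LZ"
    and p_pos: "1 \<le> p"
    and U_unitary: "unitary p U"
    and I_ok: "addr_set k p I"
    and Q_pauli: "\<forall>i<n. Q i \<in> {gI, gX, gY, gZ}"
    and c_phase: "cmod c = 1"
    and G_def: "G = (\<lambda>x y. c * mat_mult n (tensor n (\<lambda>i. vgate (V i))) (tensor n Q) x y)"
    and realizes: "has_logical_action n A B k LX LZ G (addr_target k p U I)"
  shows "\<forall>i<n. V i \<notin> {VH, VPH, VHP}"
proof -
  have A: "f2_subspace n A" and B: "f2_subspace n B" using css by (auto simp: css_code_def)
  have c: "c \<noteq> 0" using c_phase by auto
  have G: "G = clifford_circuit n c V Q" unfolding G_def clifford_circuit_def ..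
  obtain j where j: "j < k" "j \<notin> (\<Union>t\<in>I. set t)"
    using addr_set_unaddressed[OF I_ok] by blast
  have "preserves_stabilizers n A B V"
    using circuit_preserves_stabilizers[OF Q_pauli c css] realizes
    by (simp add: G has_logical_action_def)
  moreover obtain s1 u1 v1 s2 u2 v2 where
    X: "s1 \<noteq> 0" "u1 \<in> bvecs n" "v1 \<in> bvecs n" "LX j = (\<lambda>x y. s1 * pauli_mono n u1 v1 x y)"
    and Z: "s2 \<noteq> 0" "u2 \<in> bvecs n" "v2 \<in> bvecs n" "LZ j = (\<lambda>x y. s2 * pauli_mono n u2 v2 x y)"
    and "in_centralizer n A B u1 v1" "in_centralizer n A B u2 v2" "symp_form n u1 v1 u2 v2"
    using logical_paulis_symplectic[OF css lpaulis \<open>j < k\<close>] by blast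
  moreover have "fixed_mod_stabilizers n A B V u1 v1" "fixed_mod_stabilizers n A B V u2 v2"
    using circuit_commuting_pauli_fixed[OF Q_pauli c css X(1-4)]
      circuit_commuting_pauli_fixed[OF Q_pauli c css Z(1-4)]
      circuit_commutes_with_unaddressed_logicals[OF realizes lpaulis I_ok j]
    by (simp_all add: G)
  ultimately show ?thesis
    by (intro no_H_PH_HP[OF A B nonsplit]) simp_all
qed

end
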